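(* Let $T$ be a split Leibniz triple system with symmetric root system $\Lambda^1$, and suppose $\Lambda^0$ is symmetric. If $\mathrm{Ann}(T)=0$ and $\{T,T,T\}=T$, then $$T=\bigoplus_{[\alpha]\in\Lambda^1/\sim}I_{[\alpha]},$$ where $I_{[\alpha]}=T_{0,\Lambda^1_\alpha}\oplus V_{\Lambda^1_\alpha}$ are ideals of $T$.
   Context: A Leibniz triple system is a vector space $T$ over a field $\mathbb{K}$ with a trilinear product $\{\cdot,\cdot,\cdot\}$ satisfying, for all $a,b,c,d,e\in T$: $\{a,\{b,c,d\},e\}=\{\{a,b,c\},d,e\}-\{\{a,c,b\},d,e\}-\{\{a,d,b\},c,e\}+\{\{a,d,c\},b,e\}$ and $\{a,b,\{c,d,e\}\}=\{\{a,b,c\},d,e\}-\{\{a,b,d\},c,e\}-\{\{a,b,e\},c,d\}+\{\{a,b,e\},d,c\}$. The annihilator is $\mathrm{Ann}(T)=\{x\in T:\{x,T,T\}+\{T,x,T\}+\{T,T,x\}=0\}$. Its standard embedding is the right Leibniz algebra $L=L^0\oplus L^1$ ($L^0$ the span of symbols $x\otimes y$, $L^1=T$) with product $[(x\otimes y,z),(u\otimes v,w)]=(\{x,y,u\}\otimes v-\{x,y,v\}\otimes u+z\otimes w,\ \{x,y,w\}+\{z,u,v\}-\{z,v,u\})$; so $[x,y]=x\otimes y$ and $\{x,y,z\}=[[x,y],z]$ for $x,y,z\in T$. Let $H^0$ be a maximal abelian subalgebra of $L^0$; for $\alpha\in(H^0)^*$ put $T_\alpha=\{t\in T:[t,h]=\alpha(h)t\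 \forall h\in H^0\}$, $L^0_\alpha=\{v\in L^0:[v,h]=\alpha(h)v\ \forall h\in H^0\}$, $\Lambda^1=\{\alpha\neq0:T_\alpha\neq0\}$, $\Lambda^0=\{\alpha\neq0:L^0_\alpha\neq0\}$. $T$ is split (w.r.t. $H^0$) if $T=T_0\oplus\bigoplus_{\alpha\in\Lambda^1}T_\alpha$, $\{T_0,T_0,T_0\}=0$ and $\{T_\alpha,T_{-\alpha},T_0\}=0$ for all $\alpha\in\Lambda^1$. A set $\Lambda\subset(H^0)^*$ is symmetric if $\alpha\in\Lambda$ implies $-\alpha\in\Lambda$. Two roots $\alpha,\beta\in\Lambda^1$ are connected if there is a family $\alpha_1,\dots,\alpha_{2n+1}\in\Lambda^1\cup\{0\}$ with: $\alpha_1+\dots+\alpha_{2k+1}\in\Lambda^1$ for $k=0,\dots,n$; $\alpha_1+\dots+\alpha_{2k}\in\Lambda^0$ for $k=1,\dots,n$; $\alpha_1=\alpha$ and $\alpha_1+\dots+\alpha_{2n+1}\in\{\beta,-\beta\}$. $\Lambda^1_\alpha$ is the set of $\beta\in\Lambda^1$ connected with $\alpha$; $\alpha\sim\beta$ iff $\beta\in\Lambda^1_\alpha$, and $[\alpha]$ is the class of $\alpha$. For $\alpha\in\Lambda^1$: $T_{0,\Lambda^1_\alpha}=\mathrm{span}_{\mathbb{K}}\{\{T_{\beta_1},T_{\beta_2},T_{\beta_3}\}:\beta_1+\beta_2+\beta_3=0,\ \beta_i\in\Lambda^1_\alpha\cup\{0\}\}$ and $V_{\Lambda^1_\alpha}=\bigoplus_{\gamma\in\Lambda^1_\alpha}T_\gamma$.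 *)

theory Defs
  imports Main "HOL.Vector_Spaces" "HOL-Library.Function_Algebras"
begin

definition LTS :: "('k::field \<Rightarrow> 'v::ab_group_add \<Rightarrow> 'v) \<Rightarrow> ('v \<Rightarrow> 'v \<Rightarrow> 'v \<Rightarrow> 'v) \<Rightarrow> bool" where
  "LTS sc tp \<longleftrightarrow> vector_space sc
     \<and> (\<forall>b c. Vector_Spaces.linear sc sc (\<lambda>a. tp a b c))
     \<and> (\<forall>a c. Vector_Spaces.linear sc sc (\<lambda>b. tp a b c))
     \<and> (\<forall>a b. Vector_Spaces.linear sc sc (\<lambda>c. tp a b c))
     \<and> (\<forall>a b c d e. tp a (tp b c d) e =
           tp (tp a b c) d e - tp (tp a c b) d e - tp (tp a d b) c e + tp (tp a d c) b e)
     \<and> (\<forall>a b c d e. tp a b (tp c d e) =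
           tp (tp a b c) d e - tp (tp a b d) c e - tp (tp a b e) c d + tp (tp a b e) d c)"

definition Ann :: "('v::ab_group_add \<Rightarrow> 'v \<Rightarrow> 'v \<Rightarrow> 'v) \<Rightarrow> 'v set" where
  "Ann tp = {x. \<forall>a b. tp x a b = 0 \<and> tp a x b = 0 \<and> tp a b x = 0}"

definition is_ideal :: "('k::field \<Rightarrow> 'v::ab_group_add \<Rightarrow> 'v) \<Rightarrow> ('v \<Rightarrow> 'v \<Rightarrow> 'v \<Rightarrow> 'v) \<Rightarrow> 'v set \<Rightarrow> bool" where
  "is_ideal sc tp I \<longleftrightarrow> module.subspace sc I
     \<and> (\<forall>x\<in>I. \<forall>a b. tp x a b \<in> I \<and> tp a x b \<in> I \<and> tp a b x \<in> I)"

definition is_direct_sum :: "('k::field \<Rightarrow> 'v::ab_group_add \<Rightarrow> 'v) \<Rightarrow> 'i set \<Rightarrow> ('i \<Rightarrow> 'v set) \<Rightarrow> 'v set \<Rightarrow> bool" where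
  "is_direct_sum sc I V U \<longleftrightarrow>
     (\<forall>i\<in>I. module.subspace sc (V i))
     \<and> (\<forall>x. x \<in> U \<longleftrightarrow> (\<exists>F f. finite F \<and> F \<subseteq> I \<and> (\<forall>i\<in>F. f i \<in> V i) \<and> x = (\<Sum>i\<in>F. f i)))
     \<and> (\<forall>F f. finite F \<longrightarrow> F \<subseteq> I \<longrightarrow> (\<forall>i\<in>F. f i \<in> V i) \<longrightarrow> (\<Sum>i\<in>F. f i) = 0
            \<longrightarrow> (\<forall>i\<in>F. f i = 0))"

text \<open>An element of L^0 is represented by a formal finite sum of symbols x\<otimes>y,
i.e. a list of pairs (x,y).  Scalars are absorbed into the first tensor factor.
Two formal sums are identified in L^0 iff they act identically on T = L^1 from the
left (z \<mapsto> [v,z]) and from the right (z \<mapsto> [z,v]) in the standard embedding.\<close>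

type_synonym 'v L0 = "('v \<times> 'v) list"

definition Lop :: "('v::ab_group_add \<Rightarrow> 'v \<Rightarrow> 'v \<Rightarrow> 'v) \<Rightarrow> 'v L0 \<Rightarrow> 'v \<Rightarrow> 'v" where
  "Lop tp v z = (\<Sum>(x,y)\<leftarrow>v. tp x y z)"

definition Rop :: "('v::ab_group_add \<Rightarrow> 'v \<Rightarrow> 'v \<Rightarrow> 'v) \<Rightarrow> 'v L0 \<Rightarrow> 'v \<Rightarrow> 'v" where
  "Rop tp v z = (\<Sum>(x,y)\<leftarrow>v. tp z x y - tp z y x)"

definition eqL :: "('v::ab_group_add \<Rightarrow> 'v \<Rightarrow> 'v \<Rightarrow> 'v) \<Rightarrow> 'v L0 \<Rightarrow> 'v L0 \<Rightarrow> bool" where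
  "eqL tp v w \<longleftrightarrow> Lop tp v = Lop tp w \<and> Rop tp v = Rop tp w"

definition smulL :: "('k \<Rightarrow> 'v \<Rightarrow> 'v) \<Rightarrow> 'k \<Rightarrow> 'v L0 \<Rightarrow> 'v L0" where
  "smulL sc c v = map (\<lambda>(x,y). (sc c x, y)) v"

text \<open>[x\<otimes>y, u\<otimes>w] = {x,y,u}\<otimes>w - {x,y,w}\<otimes>u, extended bilinearly.\<close>
definition brL :: "('k::field \<Rightarrow> 'v::ab_group_add \<Rightarrow> 'v) \<Rightarrow> ('v \<Rightarrow> 'v \<Rightarrow> 'v \<Rightarrow> 'v) \<Rightarrow> 'v L0 \<Rightarrow> 'v L0 \<Rightarrow> 'v L0" where
  "brL sc tp v w = concat (map (\<lambda>(x,y). concat (map (\<lambda>(u,w'). [(tp x y u, w'), (sc (-1) (tp x y w'), u)]) w)) v)"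

text \<open>H is a subalgebra of L^0 (a set of representatives saturated under eqL).\<close>
definition subalgL :: "('k::field \<Rightarrow> 'v::ab_group_add \<Rightarrow> 'v) \<Rightarrow> ('v \<Rightarrow> 'v \<Rightarrow> 'v \<Rightarrow> 'v) \<Rightarrow> 'v L0 set \<Rightarrow> bool" where
  "subalgL sc tp H \<longleftrightarrow> [] \<in> H
     \<and> (\<forall>v\<in>H. \<forall>w\<in>H. v @ w \<in> H)
     \<and> (\<forall>c. \<forall>v\<in>H. smulL sc c v \<in> H)
     \<and> (\<forall>v\<in>H. \<forall>w. eqL tp v w \<longrightarrow> w \<in> H)
     \<and> (\<forall>v\<in>H. \<forall>w\<in>H. brL sc tp v w \<in> H)"

definition abelianL :: "('k::field \<Rightarrow> 'v::ab_group_add \<Rightarrow> 'v) \<Rightarrow> ('v \<Rightarrow> 'v \<Rightarrow> 'v \<Rightarrow> 'v) \<Rightarrow> 'v L0 set \<Rightarrow> bool" where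
  "abelianL sc tp H \<longleftrightarrow> subalgL sc tp H \<and> (\<forall>v\<in>H. \<forall>w\<in>H. eqL tp (brL sc tp v w) [])"

definition max_abelianL :: "('k::field \<Rightarrow> 'v::ab_group_add \<Rightarrow> 'v) \<Rightarrow> ('v \<Rightarrow> 'v \<Rightarrow> 'v \<Rightarrow> 'v) \<Rightarrow> 'v L0 set \<Rightarrow> bool" where
  "max_abelianL sc tp H \<longleftrightarrow> abelianL sc tp H \<and> (\<forall>H'. abelianL sc tp H' \<longrightarrow> H \<subseteq> H' \<longrightarrow> H' = H)"

text \<open>Elements of (H^0)^*: linear functionals on H (well defined on L^0), normalised
to vanish outside H so that equality of functionals is equality of functions.\<close>
definition dualH :: "('k::field \<Rightarrow> 'v::ab_group_add \<Rightarrow> 'v) \<Rightarrow> ('v \<Rightarrow> 'v \<Rightarrow> 'v \<Rightarrow> 'v) \<Rightarrow> 'v L0 set \<Rightarrow> ('v L0 \<Rightarrow> 'k) \<Rightarrow> bool" where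
  "dualH sc tp H \<alpha> \<longleftrightarrow> (\<forall>v. v \<notin> H \<longrightarrow> \<alpha> v = 0)
     \<and> (\<forall>v\<in>H. \<forall>w\<in>H. \<alpha> (v @ w) = \<alpha> v + \<alpha> w)
     \<and> (\<forall>c. \<forall>v\<in>H. \<alpha> (smulL sc c v) = c * \<alpha> v)
     \<and> (\<forall>v\<in>H. \<forall>w. eqL tp v w \<longrightarrow> \<alpha> v = \<alpha> w)"

text \<open>T_\<alpha> = {t. [t,h] = \<alpha>(h) t for all h \<in> H}; note [t, x\<otimes>y] = {t,x,y} - {t,y,x}.\<close>
definition Troot :: "('k::field \<Rightarrow> 'v::ab_group_add \<Rightarrow> 'v) \<Rightarrow> ('v \<Rightarrow> 'v \<Rightarrow> 'v \<Rightarrow> 'v) \<Rightarrow> 'v L0 set \<Rightarrow> ('v L0 \<Rightarrow> 'k) \<Rightarrow> 'v set" where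
  "Troot sc tp H \<alpha> = {t. \<forall>h\<in>H. Rop tp h t = sc (\<alpha> h) t}"

definition L0root :: "('k::field \<Rightarrow> 'v::ab_group_add \<Rightarrow> 'v) \<Rightarrow> ('v \<Rightarrow> 'v \<Rightarrow> 'v \<Rightarrow> 'v) \<Rightarrow> 'v L0 set \<Rightarrow> ('v L0 \<Rightarrow> 'k) \<Rightarrow> 'v L0 set" where
  "L0root sc tp H \<alpha> = {v. \<forall>h\<in>H. eqL tp (brL sc tp v h) (smulL sc (\<alpha> h) v)}"

definition Lambda1 :: "('k::field \<Rightarrow> 'v::ab_group_add \<Rightarrow> 'v) \<Rightarrow> ('v \<Rightarrow> 'v \<Rightarrow> 'v \<Rightarrow> 'v) \<Rightarrow> 'v L0 set \<Rightarrow> ('v L0 \<Rightarrow> 'k) set" where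
  "Lambda1 sc tp H = {\<alpha>. dualH sc tp H \<alpha> \<and> \<alpha> \<noteq> 0 \<and> Troot sc tp H \<alpha> \<noteq> {0}}"

definition Lambda0 :: "('k::field \<Rightarrow> 'v::ab_group_add \<Rightarrow> 'v) \<Rightarrow> ('v \<Rightarrow> 'v \<Rightarrow> 'v \<Rightarrow> 'v) \<Rightarrow> 'v L0 set \<Rightarrow> ('v L0 \<Rightarrow> 'k) set" where
  "Lambda0 sc tp H = {\<alpha>. dualH sc tp H \<alpha> \<and> \<alpha> \<noteq> 0 \<and> (\<exists>v\<in>L0root sc tp H \<alpha>. \<not> eqL tp v [])}"

definition symmetric_set :: "('a::uminus) set \<Rightarrow> bool" where
  "symmetric_set \<Lambda> \<longleftrightarrow> (\<forall>\<alpha>\<in>\<Lambda>. - \<alpha> \<in> \<Lambda>)"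

definition split_LTS :: "('k::field \<Rightarrow> 'v::ab_group_add \<Rightarrow> 'v) \<Rightarrow> ('v \<Rightarrow> 'v \<Rightarrow> 'v \<Rightarrow> 'v) \<Rightarrow> 'v L0 set \<Rightarrow> bool" where
  "split_LTS sc tp H \<longleftrightarrow>
     is_direct_sum sc (insert 0 (Lambda1 sc tp H)) (Troot sc tp H) UNIV
     \<and> (\<forall>x\<in>Troot sc tp H 0. \<forall>y\<in>Troot sc tp H 0. \<forall>z\<in>Troot sc tp H 0. tp x y z = 0)
     \<and> (\<forall>\<alpha>\<in>Lambda1 sc tp H. \<forall>x\<in>Troot sc tp H \<alpha>. \<forall>y\<in>Troot sc tp H (- \<alpha>).
          \<forall>z\<in>Troot sc tp H 0. tp x y z = 0)"

definition connected_roots :: "('k::field \<Rightarrow> 'v::ab_group_add \<Rightarrow> 'v) \<Rightarrow> ('v \<Rightarrow> 'v \<Rightarrow> 'v \<Rightarrow> 'v) \<Rightarrow> 'v L0 set \<Rightarrow> ('v L0 \<Rightarrow> 'k) \<Rightarrow> ('v L0 \<Rightarrow> 'k) \<Rightarrow> bool" where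
  "connected_roots sc tp H \<alpha> \<beta> \<longleftrightarrow> (\<exists>(n::nat) (a :: nat \<Rightarrow> 'v L0 \<Rightarrow> 'k).
      (\<forall>i\<in>{1..2*n+1}. a i \<in> insert 0 (Lambda1 sc tp H))
      \<and> (\<forall>k\<in>{0..n}. (\<Sum>i=1..2*k+1. a i) \<in> Lambda1 sc tp H)
      \<and> (\<forall>k\<in>{1..n}. (\<Sum>i=1..2*k. a i) \<in> Lambda0 sc tp H)
      \<and> a 1 = \<alpha>
      \<and> (\<Sum>i=1..2*n+1. a i) \<in> {\<beta>, - \<beta>})"

definition conn_class :: "('k::field \<Rightarrow> 'v::ab_group_add \<Rightarrow> 'v) \<Rightarrow> ('v \<Rightarrow> 'v \<Rightarrow> 'v \<Rightarrow> 'v) \<Rightarrow> 'v L0 set \<Rightarrow> ('v L0 \<Rightarrow> 'k) \<Rightarrow> ('v L0 \<Rightarrow> 'k) set" where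
  "conn_class sc tp H \<alpha> = {\<beta>\<in>Lambda1 sc tp H. connected_roots sc tp H \<alpha> \<beta>}"

definition T0part :: "('k::field \<Rightarrow> 'v::ab_group_add \<Rightarrow> 'v) \<Rightarrow> ('v \<Rightarrow> 'v \<Rightarrow> 'v \<Rightarrow> 'v) \<Rightarrow> 'v L0 set \<Rightarrow> ('v L0 \<Rightarrow> 'k) set \<Rightarrow> 'v set" where
  "T0part sc tp H \<Lambda> = module.span sc
     {tp x y z | x y z \<beta>1 \<beta>2 \<beta>3. \<beta>1 \<in> insert 0 \<Lambda> \<and> \<beta>2 \<in> insert 0 \<Lambda> \<and> \<beta>3 \<in> insert 0 \<Lambda>
        \<and> \<beta>1 + \<beta>2 + \<beta>3 = 0
        \<and> x \<in> Troot sc tp H \<beta>1 \<and> y \<in> Troot sc tp H \<beta>2 \<and> z \<in> Troot sc tp H \<beta>3}"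

definition Vpart :: "('k::field \<Rightarrow> 'v::ab_group_add \<Rightarrow> 'v) \<Rightarrow> ('v \<Rightarrow> 'v \<Rightarrow> 'v \<Rightarrow> 'v) \<Rightarrow> 'v L0 set \<Rightarrow> ('v L0 \<Rightarrow> 'k) set \<Rightarrow> 'v set" where
  "Vpart sc tp H \<Lambda> = module.span sc (\<Union>\<gamma>\<in>\<Lambda>. Troot sc tp H \<gamma>)"

definition Ipart :: "('k::field \<Rightarrow> 'v::ab_group_add \<Rightarrow> 'v) \<Rightarrow> ('v \<Rightarrow> 'v \<Rightarrow> 'v \<Rightarrow> 'v) \<Rightarrow> 'v L0 set \<Rightarrow> ('v L0 \<Rightarrow> 'k) set \<Rightarrow> 'v set" where
  "Ipart sc tp H \<Lambda> = {x + y | x y. x \<in> T0part sc tp H \<Lambda> \<and> y \<in> Vpart sc tp H \<Lambda>}"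

end

theory Submission
  imports Defs
begin

(* Products of weight vectors respect the grading, {T_a, T_b, T_c} <= T_(a+b+c), and a nonzero
   product {x, y, z} makes [x, y] a nonzero element of L^0_(a+b) and, via the right action,
   [y, z] one of L^0_(b+c).  Using these roots of L^0 as intermediate steps of connections, all
   nonzero weights among a, b, c, a+b+c lie in one class.  Expanding with the two Leibniz
   identities, this makes every I_[alpha] an ideal.  For distinct classes, products
   {I_[alpha], I_[beta], T} and {I_[alpha], T, I_[beta]} lie in both ideals, whose common weight
   vectors have weight 0; those of total weight 0 are expanded once more and vanish by the class
   property together with the splitting conditions {T_0, T_0, T_0} = 0 and {T_g, T_-g, T_0} = 0.
   As T = {T, T, T}, the ideals span T, and each component of a vanishing sum then annihilates
   all of them, so it lies in Ann(T) = 0. *)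

locale leibniz_triple_system =
  fixes sc :: "'k::field \<Rightarrow> 'v::ab_group_add \<Rightarrow> 'v"
    and tp :: "'v \<Rightarrow> 'v \<Rightarrow> 'v \<Rightarrow> 'v"
  assumes LTS: "LTS sc tp"
begin

sublocale vs: vector_space sc
  using LTS by (simp add: LTS_def)

lemma tp_hom_left: "module_hom sc sc (\<lambda>a. tp a b c)"
  and tp_hom_middle: "module_hom sc sc (\<lambda>b. tp a b c)"
  and tp_hom_right: "module_hom sc sc (\<lambda>c. tp a b c)"
  using LTS by (simp_all add: LTS_def linear_iff_module_hom)

lemma leibniz_middle:
  "tp a (tp b c d) e = tp (tp a b c) d e - tp (tp a c b) d e - tp (tp a d b) c e + tp (tp a d c) b e"
  using LTS by (simp add: LTS_def)

lemma leibniz_right: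
  "tp a b (tp c d e) = tp (tp a b c) d e - tp (tp a b d) c e - tp (tp a b e) c d + tp (tp a b e) d c"
  using LTS by (simp add: LTS_def)

lemma tp_simps [simp]:
  "tp (a + a') b c = tp a b c + tp a' b c"
  "tp a (b + b') c = tp a b c + tp a b' c"
  "tp a b (c + c') = tp a b c + tp a b c'"
  "tp (a - a') b c = tp a b c - tp a' b c"
  "tp a (b - b') c = tp a b c - tp a b' c"
  "tp a b (c - c') = tp a b c - tp a b c'"
  "tp (- a) b c = - tp a b c"
  "tp a (- b) c = - tp a b c"
  "tp a b (- c) = - tp a b c"
  "tp 0 b c = 0" "tp a 0 c = 0" "tp a b 0 = 0"
  "tp (sc k a) b c = sc k (tp a b c)"
  "tp a (sc k b) c = sc k (tp a b c)"
  "tp a b (sc k c) = sc k (tp a b c)"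
  using module_hom.add[OF tp_hom_left] module_hom.add[OF tp_hom_middle] module_hom.add[OF tp_hom_right]
    module_hom.diff[OF tp_hom_left] module_hom.diff[OF tp_hom_middle] module_hom.diff[OF tp_hom_right]
    module_hom.neg[OF tp_hom_left] module_hom.neg[OF tp_hom_middle] module_hom.neg[OF tp_hom_right]
    module_hom.zero[OF tp_hom_left] module_hom.zero[OF tp_hom_middle] module_hom.zero[OF tp_hom_right]
    module_hom.scale[OF tp_hom_left] module_hom.scale[OF tp_hom_middle] module_hom.scale[OF tp_hom_right]
  by auto

lemma tp_sum_left: "tp (\<Sum>i\<in>F. f i) b c = (\<Sum>i\<in>F. tp (f i) b c)"
  and tp_sum_middle: "tp a (\<Sum>i\<in>F. f i) c = (\<Sum>i\<in>F. tp a (f i) c)"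
  and tp_sum_right: "tp a b (\<Sum>i\<in>F. f i) = (\<Sum>i\<in>F. tp a b (f i))"
  by (simp_all add: module_hom.sum[OF tp_hom_left] module_hom.sum[OF tp_hom_middle]
      module_hom.sum[OF tp_hom_right])

lemma Rop_Nil [simp]: "Rop tp [] t = 0"
  and Rop_Cons [simp]: "Rop tp ((u, w) # h) t = (tp t u w - tp t w u) + Rop tp h t"
  and Lop_Nil [simp]: "Lop tp [] t = 0"
  and Lop_Cons [simp]: "Lop tp ((u, w) # h) t = tp u w t + Lop tp h t"
  by (simp_all add: Rop_def Lop_def)

lemma Rop_simps [simp]:
  "Rop tp h (a + b) = Rop tp h a + Rop tp h b"
  "Rop tp h (a - b) = Rop tp h a - Rop tp h b"
  "Rop tp h (- a) = - Rop tp h a"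
  "Rop tp h 0 = 0"
  "Rop tp h (sc k a) = sc k (Rop tp h a)"
  by (induction h) (auto simp: algebra_simps)

lemma Rop_derivation:
  "Rop tp h (tp x y z) = tp (Rop tp h x) y z + tp x (Rop tp h y) z + tp x y (Rop tp h z)"
  by (induction h) (auto simp: leibniz_middle leibniz_right algebra_simps)

lemma brL_singleton_Cons:
  "brL sc tp [(x, y)] ((u, w) # h) = [(tp x y u, w), (sc (-1) (tp x y w), u)] @ brL sc tp [(x, y)] h"
  and brL_singleton_Nil: "brL sc tp [(x, y)] [] = []"
  by (simp_all add: brL_def)

lemma Lop_brL_singleton:
  "Lop tp (brL sc tp [(x, y)] h) z = tp x y (Lop tp h z) + Rop tp h (tp x y z)"
  by (induction h) (auto simp: brL_singleton_Cons brL_singleton_Nil leibniz_middle leibniz_right algebra_simps)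

lemma Rop_brL_singleton:
  "Rop tp (brL sc tp [(x, y)] h) z = Rop tp h (Rop tp [(x, y)] z) - Rop tp [(x, y)] (Rop tp h z)"
  by (induction h) (auto simp: brL_singleton_Cons brL_singleton_Nil leibniz_middle leibniz_right algebra_simps)

lemma tp_Lop_plus_Rop: "tp x y (Lop tp h z + Rop tp h z) = 0"
  by (induction h) (auto simp: leibniz_middle leibniz_right algebra_simps)

end

lemma (in module) span_UN_subspaces_sum:
  assumes "\<And>i. i \<in> I \<Longrightarrow> subspace (V i)" and "x \<in> span (\<Union>i\<in>I. V i)"
  shows "\<exists>F f. finite F \<and> F \<subseteq> I \<and> (\<forall>i\<in>F. f i \<in> V i) \<and> x = (\<Sum>i\<in>F. f i)"
  using assms(2)
proof (induction rule: span_induct_alt)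
  case base
  show ?case by (intro exI[of _ "{}"]) simp
next
  case (step c v y)
  then obtain i F f where i: "i \<in> I" "v \<in> V i"
    and F: "finite F" "F \<subseteq> I" "\<forall>j\<in>F. f j \<in> V j" "y = (\<Sum>j\<in>F. f j)"
    by blast
  define g where "g = f(i := c *s v + (if i \<in> F then f i else 0))"
  have "c *s v + y = g i + (\<Sum>j\<in>F - {i}. g j)"
    using F by (simp add: g_def sum.remove[of F i f] algebra_simps)
  also have "\<dots> = (\<Sum>j\<in>insert i F. g j)"
    using F(1) by (simp add: sum.insert_remove)
  finally have "c *s v + y = (\<Sum>j\<in>insert i F. g j)" .
  moreover have "\<forall>j\<in>insert i F. g j \<in> V j"
    using F(3) i assms(1)[OF i(1)] by (auto simp: g_def subspace_add subspace_scale subspace_0)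
  ultimately show ?case
    using F i by (intro exI[of _ "insert i F"] exI[of _ g]) auto
qed

locale split_leibniz_triple_system = leibniz_triple_system sc tp
  for sc :: "'k::field \<Rightarrow> 'v::ab_group_add \<Rightarrow> 'v" and tp +
  fixes H :: "'v L0 set"
  assumes split: "split_LTS sc tp H"
    and symmetric_\<Lambda>1: "symmetric_set (Lambda1 sc tp H)"
    and symmetric_\<Lambda>0: "symmetric_set (Lambda0 sc tp H)"
begin

abbreviation "\<Lambda>1 \<equiv> Lambda1 sc tp H"
abbreviation "\<Lambda>0 \<equiv> Lambda0 sc tp H"
abbreviation "T \<equiv> Troot sc tp H"
abbreviation "dual \<equiv> dualH sc tp H"

lemma root_decomposition:
  obtains F f where "finite F" "F \<subseteq> insert 0 \<Lambda>1" "\<forall>\<mu>\<in>F. f \<mu> \<in> T \<mu>" "x = (\<Sum>\<mu>\<in>F. f \<mu>)"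
proof -
  have "\<exists>F f. finite F \<and> F \<subseteq> insert 0 \<Lambda>1 \<and> (\<forall>\<mu>\<in>F. f \<mu> \<in> T \<mu>) \<and> x = (\<Sum>\<mu>\<in>F. f \<mu>)"
    using split unfolding split_LTS_def is_direct_sum_def by simp
  then show ?thesis using that by (elim exE conjE)
qed

lemma root_decomposition_unique:
  assumes "finite F" "F \<subseteq> insert 0 \<Lambda>1" "\<forall>\<mu>\<in>F. f \<mu> \<in> T \<mu>" "(\<Sum>\<mu>\<in>F. f \<mu>) = 0" "\<mu> \<in> F"
  shows "f \<mu> = 0"
proof -
  have "\<forall>F f. finite F \<longrightarrow> F \<subseteq> insert 0 \<Lambda>1 \<longrightarrow> (\<forall>\<mu>\<in>F. f \<mu> \<in> T \<mu>) \<longrightarrow> (\<Sum>\<mu>\<in>F. f \<mu>) = 0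
      \<longrightarrow> (\<forall>\<mu>\<in>F. f \<mu> = 0)"
    using split unfolding split_LTS_def is_direct_sum_def by (elim conjE)
  then show ?thesis using assms by blast
qed

lemma tp_T0_T0_T0: "x \<in> T 0 \<Longrightarrow> y \<in> T 0 \<Longrightarrow> z \<in> T 0 \<Longrightarrow> tp x y z = 0"
  using split unfolding split_LTS_def by (elim conjE) blast

lemma tp_opposite_T0:
  assumes "\<rho> \<in> insert 0 \<Lambda>1" "x \<in> T \<rho>" "y \<in> T (- \<rho>)" "z \<in> T 0"
  shows "tp x y z = 0"
proof (cases "\<rho> = 0")
  case True
  then show ?thesis using assms tp_T0_T0_T0 by simp
next
  case False
  then show ?thesis using assms split unfolding split_LTS_def by (elim conjE) blast
qed

lemma uminus_\<Lambda>1_iff [simp]: "- \<alpha> \<in> \<Lambda>1 \<longleftrightarrow> \<alpha> \<in> \<Lambda>1"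
  using symmetric_\<Lambda>1 unfolding symmetric_set_def by force

lemma uminus_\<Lambda>0_iff [simp]: "- \<alpha> \<in> \<Lambda>0 \<longleftrightarrow> \<alpha> \<in> \<Lambda>0"
  using symmetric_\<Lambda>0 unfolding symmetric_set_def by force

lemma uminus_roots_iff [simp]: "- \<alpha> \<in> insert 0 \<Lambda>1 \<longleftrightarrow> \<alpha> \<in> insert 0 \<Lambda>1"
  by (metis insert_iff minus_zero neg_equal_0_iff_equal uminus_\<Lambda>1_iff)

lemma \<Lambda>1_nonzero: "\<alpha> \<in> \<Lambda>1 \<Longrightarrow> \<alpha> \<noteq> 0"
  by (simp add: Lambda1_def)

lemma dual_add: "dual \<alpha> \<Longrightarrow> dual \<beta> \<Longrightarrow> dual (\<alpha> + \<beta>)"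
  and dual_root: "\<alpha> \<in> insert 0 \<Lambda>1 \<Longrightarrow> dual \<alpha>"
  by (auto simp: dualH_def Lambda1_def algebra_simps)

lemma mem_T_iff: "t \<in> T \<alpha> \<longleftrightarrow> (\<forall>h\<in>H. Rop tp h t = sc (\<alpha> h) t)"
  by (simp add: Troot_def)

lemma subspace_T: "vs.subspace (T \<alpha>)"
  by (simp add: vs.subspace_def mem_T_iff vs.scale_right_distrib vs.scale_left_commute)

lemma tp_T: "x \<in> T \<alpha> \<Longrightarrow> y \<in> T \<beta> \<Longrightarrow> z \<in> T \<gamma> \<Longrightarrow> tp x y z \<in> T (\<alpha> + \<beta> + \<gamma>)"
  by (simp add: mem_T_iff Rop_derivation vs.scale_left_distrib)

lemma nonzero_T_root: "x \<in> T \<alpha> \<Longrightarrow> x \<noteq> 0 \<Longrightarrow> dual \<alpha> \<Longrightarrow> \<alpha> \<in> insert 0 \<Lambda>1"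
  by (auto simp: Lambda1_def)

lemma span_root_spaces: "vs.span (\<Union>\<mu>\<in>insert 0 \<Lambda>1. T \<mu>) = UNIV"
proof -
  have "x \<in> vs.span (\<Union>\<mu>\<in>insert 0 \<Lambda>1. T \<mu>)" for x
  proof -
    obtain F f where F: "finite F" "F \<subseteq> insert 0 \<Lambda>1" "\<forall>\<mu>\<in>F. f \<mu> \<in> T \<mu>" "x = (\<Sum>\<mu>\<in>F. f \<mu>)"
      by (rule root_decomposition)
    have "f \<mu> \<in> vs.span (\<Union>\<mu>\<in>insert 0 \<Lambda>1. T \<mu>)" if "\<mu> \<in> F" for \<mu>
      using F(2,3) that by (intro vs.span_base) blast
    then show ?thesis unfolding F(4) by (rule vs.span_sum)
  qed
  then show ?thesis by blast
qed

lemma root_vector_induct [case_names subspace root_vector]: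
  assumes "vs.subspace {a. P a}" and "\<And>\<mu> x. \<mu> \<in> insert 0 \<Lambda>1 \<Longrightarrow> x \<in> T \<mu> \<Longrightarrow> P x"
  shows "P a"
  using vs.span_induct[of a "\<Union>\<mu>\<in>insert 0 \<Lambda>1. T \<mu>" P] assms span_root_spaces by blast

lemma linear_root_vector_induct:
  assumes "vs.subspace M" and "module_hom sc sc f"
    and "\<And>\<mu> x. \<mu> \<in> insert 0 \<Lambda>1 \<Longrightarrow> x \<in> T \<mu> \<Longrightarrow> f x \<in> M"
  shows "f a \<in> M"
proof (induction a rule: root_vector_induct)
  case subspace
  show ?case using module_hom.subspace_vimage[OF assms(2,1)] by (simp add: vimage_def)
qed (fact assms(3))

lemma bilinear_root_vector_induct:
  assumes "vs.subspace M"
    and "\<And>y. module_hom sc sc (\<lambda>x. f x y)" and "\<And>x. module_hom sc sc (f x)"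
    and "\<And>\<mu> \<nu> x y. \<mu> \<in> insert 0 \<Lambda>1 \<Longrightarrow> \<nu> \<in> insert 0 \<Lambda>1 \<Longrightarrow> x \<in> T \<mu> \<Longrightarrow> y \<in> T \<nu> \<Longrightarrow> f x y \<in> M"
  shows "f a b \<in> M"
  using linear_root_vector_induct[OF assms(1,2)]
    linear_root_vector_induct[OF assms(1,3)] assms(4) by blast

lemma root_span_component_zero:
  assumes S: "S \<subseteq> insert 0 \<Lambda>1" and \<nu>: "\<nu> \<in> insert 0 \<Lambda>1 - S"
    and x: "x \<in> T \<nu>" "x \<in> vs.span (\<Union>\<gamma>\<in>S. T \<gamma>)"
  shows "x = 0"
proof -
  obtain F f where F: "finite F" "F \<subseteq> S" "\<forall>\<gamma>\<in>F. f \<gamma> \<in> T \<gamma>" "x = (\<Sum>\<gamma>\<in>F. f \<gamma>)"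
    using vs.span_UN_subspaces_sum[OF subspace_T x(2)] by blast
  define g where "g = f(\<nu> := - x)"
  have "\<nu> \<notin> F" using F(2) \<nu> by blast
  moreover have "(\<Sum>\<gamma>\<in>F. g \<gamma>) = (\<Sum>\<gamma>\<in>F. f \<gamma>)"
    by (rule sum.cong) (use \<open>\<nu> \<notin> F\<close> in \<open>auto simp: g_def\<close>)
  ultimately have "(\<Sum>\<gamma>\<in>insert \<nu> F. g \<gamma>) = 0"
    using F(1,4) by (simp add: g_def)
  moreover have "\<forall>\<gamma>\<in>insert \<nu> F. g \<gamma> \<in> T \<gamma>"
    using F(3) x(1) subspace_T vs.subspace_neg by (auto simp: g_def)
  ultimately have "g \<nu> = 0"
    using root_decomposition_unique[of "insert \<nu> F" g] F(1,2) S \<nu> by blast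
  then show ?thesis by (simp add: g_def)
qed

lemma tensor_in_L0root:
  assumes "x \<in> T \<alpha>" "y \<in> T \<beta>"
  shows "[(x, y)] \<in> L0root sc tp H (\<alpha> + \<beta>)"
  unfolding L0root_def
proof (intro CollectI ballI)
  fix h assume "h \<in> H"
  then have x: "Rop tp h x = sc (\<alpha> h) x" and y: "Rop tp h y = sc (\<beta> h) y"
    using assms by (auto simp: mem_T_iff)
  have "Lop tp (brL sc tp [(x, y)] h) z = sc (\<alpha> h + \<beta> h) (tp x y z)" for z
    using tp_Lop_plus_Rop[of x y h z]
    by (simp add: Lop_brL_singleton Rop_derivation x y vs.scale_left_distrib algebra_simps)
  moreover have "Rop tp (brL sc tp [(x, y)] h) z = sc (\<alpha> h + \<beta> h) (tp z x y - tp z y x)" for z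
    by (simp add: Rop_brL_singleton Rop_derivation x y vs.scale_left_distrib vs.scale_right_diff_distrib)
  ultimately show "eqL tp (brL sc tp [(x, y)] h) (smulL sc ((\<alpha> + \<beta>) h) [(x, y)])"
    by (simp add: eqL_def smulL_def Lop_def Rop_def fun_eq_iff vs.scale_right_diff_distrib)
qed

lemma tensor_nonzero_left: "tp x y z \<noteq> 0 \<Longrightarrow> \<not> eqL tp [(x, y)] []"
  by (metis Lop_Cons Lop_Nil add.right_neutral eqL_def)

lemma tensor_nonzero_right: "tp x y z - tp x z y \<noteq> 0 \<Longrightarrow> \<not> eqL tp [(y, z)] []"
  by (metis Rop_Cons Rop_Nil add.right_neutral eqL_def)

lemma sum_in_\<Lambda>0:
  "x \<in> T \<alpha> \<Longrightarrow> y \<in> T \<beta> \<Longrightarrow> dual \<alpha> \<Longrightarrow> dual \<beta> \<Longrightarrow> \<alpha> + \<beta> \<noteq> 0 \<Longrightarrow> \<not> eqL tp [(x, y)] []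
   \<Longrightarrow> \<alpha> + \<beta> \<in> \<Lambda>0"
  unfolding Lambda0_def using tensor_in_L0root dual_add by blast

section \<open>Connections of roots\<close>

text \<open>A connection is encoded by its partial sums: the odd ones form a chain of
  \<open>root_step\<close>s from \<open>\<alpha>\<close> to \<open>\<beta>\<close> or \<open>-\<beta>\<close>, each step passing through the even partial sum
  \<open>m \<in> \<Lambda>0\<close> between two odd ones.\<close>

definition root_step :: "('v L0 \<Rightarrow> 'k) \<Rightarrow> ('v L0 \<Rightarrow> 'k) \<Rightarrow> bool" where
  "root_step \<rho> \<rho>' \<longleftrightarrow> \<rho> \<in> \<Lambda>1 \<and> \<rho>' \<in> \<Lambda>1 \<and> (\<exists>m\<in>\<Lambda>0. m - \<rho> \<in> insert 0 \<Lambda>1 \<and> \<rho>' - m \<in> insert 0 \<Lambda>1)"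

definition is_connection :: "nat \<Rightarrow> (nat \<Rightarrow> 'v L0 \<Rightarrow> 'k) \<Rightarrow> bool" where
  "is_connection n a \<longleftrightarrow> (\<forall>i\<in>{1..2*n+1}. a i \<in> insert 0 \<Lambda>1)
     \<and> (\<forall>k\<in>{0..n}. (\<Sum>i=1..2*k+1. a i) \<in> \<Lambda>1) \<and> (\<forall>k\<in>{1..n}. (\<Sum>i=1..2*k. a i) \<in> \<Lambda>0)"

abbreviation "conn \<equiv> connected_roots sc tp H"
abbreviation "cls \<equiv> conn_class sc tp H"

lemma conn_iff_is_connection:
  "conn \<alpha> \<beta> \<longleftrightarrow> (\<exists>n a. is_connection n a \<and> a 1 = \<alpha> \<and> (\<Sum>i=1..2*n+1. a i) \<in> {\<beta>, - \<beta>})"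
  unfolding connected_roots_def is_connection_def by blast

lemma is_connection_rtranclp: "is_connection n a \<Longrightarrow> root_step\<^sup>*\<^sup>* (a 1) (\<Sum>i=1..2*n+1. a i)"
proof (induction n)
  case 0
  show ?case by simp
next
  case (Suc n)
  let ?S = "\<lambda>j. \<Sum>i=1..j. a i"
  have A: "\<forall>i\<in>{1..2*Suc n+1}. a i \<in> insert 0 \<Lambda>1" and B: "\<forall>k\<in>{0..Suc n}. ?S (2*k+1) \<in> \<Lambda>1"
    and C: "\<forall>k\<in>{1..Suc n}. ?S (2*k) \<in> \<Lambda>0"
    using Suc.prems unfolding is_connection_def by blast+
  have "is_connection n a"
    using A B C unfolding is_connection_def by auto
  moreover have "root_step (?S (2*n+1)) (?S (2*Suc n+1))"
    unfolding root_step_def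
  proof (intro conjI bexI)
    show "?S (2*n+1) \<in> \<Lambda>1" "?S (2*Suc n+1) \<in> \<Lambda>1" "?S (2*Suc n) \<in> \<Lambda>0"
      by (rule B[rule_format] C[rule_format]; simp)+
    have "?S (2*Suc n) - ?S (2*n+1) = a (2*n+2)" "?S (2*Suc n+1) - ?S (2*Suc n) = a (2*n+3)"
      by (simp_all add: numeral_3_eq_3)
    then show "?S (2*Suc n) - ?S (2*n+1) \<in> insert 0 \<Lambda>1" "?S (2*Suc n+1) - ?S (2*Suc n) \<in> insert 0 \<Lambda>1"
      using A by auto
  qed
  ultimately show ?case
    using Suc.IH rtranclp.rtrancl_into_rtrancl by metis
qed

lemma is_connection_extend:
  assumes a: "is_connection n a" and \<rho>: "(\<Sum>i=1..2*n+1. a i) = \<rho>" and step: "root_step \<rho> \<rho>'"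
  shows "\<exists>b. is_connection (Suc n) b \<and> b 1 = a 1 \<and> (\<Sum>i=1..2*Suc n+1. b i) = \<rho>'"
proof -
  obtain m where m: "m \<in> \<Lambda>0" "m - \<rho> \<in> insert 0 \<Lambda>1" "\<rho>' - m \<in> insert 0 \<Lambda>1"
    using step unfolding root_step_def by blast
  define b where "b = a(2*n+2 := m - \<rho>, 2*n+3 := \<rho>' - m)"
  have b_prefix: "(\<Sum>i=1..j. b i) = (\<Sum>i=1..j. a i)" if "j \<le> 2*n+1" for j
    using that by (intro sum.cong) (auto simp: b_def)
  have b_m: "(\<Sum>i=1..2*Suc n. b i) = m"
    using b_prefix[of "2*n+1"] \<rho> by (simp add: b_def)
  have b_\<rho>': "(\<Sum>i=1..2*Suc n+1. b i) = \<rho>'"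
    using b_m by (simp add: b_def)
  have "is_connection (Suc n) b"
    unfolding is_connection_def
  proof (intro conjI ballI)
    fix i assume "i \<in> {1..2*Suc n+1}"
    then show "b i \<in> insert 0 \<Lambda>1"
      using a m by (auto simp: b_def is_connection_def)
  next
    fix k assume k: "k \<in> {0..Suc n}"
    show "(\<Sum>i=1..2*k+1. b i) \<in> \<Lambda>1"
    proof (cases "k = Suc n")
      case True
      then have "(\<Sum>i=1..2*k+1. b i) = \<rho>'" using b_\<rho>' by (simp only:)
      then show ?thesis using step by (simp add: root_step_def)
    next
      case False
      then show ?thesis using k a b_prefix[of "2*k+1"] by (simp add: is_connection_def)
    qed
  next
    fix k assume k: "k \<in> {1..Suc n}"
    show "(\<Sum>i=1..2*k. b i) \<in> \<Lambda>0"
    proof (cases "k = Suc n")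
      case True
      then have "(\<Sum>i=1..2*k. b i) = m" using b_m by (simp only:)
      then show ?thesis using m(1) by simp
    next
      case False
      then show ?thesis using k a b_prefix[of "2*k"] by (simp add: is_connection_def)
    qed
  qed
  moreover have "b 1 = a 1" by (simp add: b_def)
  ultimately show ?thesis
    using b_\<rho>' by blast
qed

lemma rtranclp_is_connection:
  assumes "root_step\<^sup>*\<^sup>* \<alpha> \<rho>" and "\<alpha> \<in> \<Lambda>1"
  shows "\<exists>n a. is_connection n a \<and> a 1 = \<alpha> \<and> (\<Sum>i=1..2*n+1. a i) = \<rho>"
  using assms(1)
proof (induction rule: rtranclp_induct)
  case base
  show ?case
    using assms(2) by (intro exI[of _ 0] exI[of _ "\<lambda>_. \<alpha>"]) (simp add: is_connection_def)
next
  case (step \<rho> \<rho>')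
  then show ?case using is_connection_extend by metis
qed

lemma conn_iff_rtranclp: "conn \<alpha> \<beta> \<longleftrightarrow> \<alpha> \<in> \<Lambda>1 \<and> (root_step\<^sup>*\<^sup>* \<alpha> \<beta> \<or> root_step\<^sup>*\<^sup>* \<alpha> (- \<beta>))"
proof
  assume "conn \<alpha> \<beta>"
  then obtain n a where a: "is_connection n a" "a 1 = \<alpha>" "(\<Sum>i=1..2*n+1. a i) \<in> {\<beta>, - \<beta>}"
    unfolding conn_iff_is_connection by blast
  have "\<alpha> \<in> \<Lambda>1" using a(1,2) unfolding is_connection_def by force
  then show "\<alpha> \<in> \<Lambda>1 \<and> (root_step\<^sup>*\<^sup>* \<alpha> \<beta> \<or> root_step\<^sup>*\<^sup>* \<alpha> (- \<beta>))"
    using is_connection_rtranclp[OF a(1)] a(2,3) by auto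
next
  assume "\<alpha> \<in> \<Lambda>1 \<and> (root_step\<^sup>*\<^sup>* \<alpha> \<beta> \<or> root_step\<^sup>*\<^sup>* \<alpha> (- \<beta>))"
  then show "conn \<alpha> \<beta>"
    unfolding conn_iff_is_connection using rtranclp_is_connection by fastforce
qed

lemma root_step_sym: "root_step \<rho> \<rho>' \<Longrightarrow> root_step \<rho>' \<rho>"
  unfolding root_step_def by (metis minus_diff_eq uminus_roots_iff)

lemma root_step_uminus: "root_step \<rho> \<rho>' \<Longrightarrow> root_step (- \<rho>) (- \<rho>')"
proof -
  assume "root_step \<rho> \<rho>'"
  then obtain m where "\<rho> \<in> \<Lambda>1" "\<rho>' \<in> \<Lambda>1" "m \<in> \<Lambda>0" "m - \<rho> \<in> insert 0 \<Lambda>1" "\<rho>' - m \<in> insert 0 \<Lambda>1"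
    unfolding root_step_def by blast
  moreover have "- m - - \<rho> = - (m - \<rho>)" "- \<rho>' - - m = - (\<rho>' - m)" by simp_all
  ultimately show "root_step (- \<rho>) (- \<rho>')"
    unfolding root_step_def by (metis uminus_\<Lambda>0_iff uminus_\<Lambda>1_iff uminus_roots_iff)
qed

lemma rtranclp_root_step_sym: "root_step\<^sup>*\<^sup>* \<rho> \<rho>' \<Longrightarrow> root_step\<^sup>*\<^sup>* \<rho>' \<rho>"
  using symp_rtranclp[of root_step] root_step_sym by (metis sympD sympI)

lemma rtranclp_root_step_uminus: "root_step\<^sup>*\<^sup>* \<rho> \<rho>' \<Longrightarrow> root_step\<^sup>*\<^sup>* (- \<rho>) (- \<rho>')"
proof (induction rule: rtranclp_induct)
  case (step y z)
  \<comment> \<open>explicit instantiation: unification fails on the negated function-valued arguments\<close>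
  show ?case
    using rtranclp.rtrancl_into_rtrancl[of root_step "- \<rho>" "- y" "- z"] step.IH
      root_step_uminus[OF step.hyps(2)] by blast
qed simp

lemma conn_imp_\<Lambda>1: "conn \<alpha> \<beta> \<Longrightarrow> \<alpha> \<in> \<Lambda>1"
  by (simp add: conn_iff_rtranclp)

lemma conn_refl: "\<alpha> \<in> \<Lambda>1 \<Longrightarrow> conn \<alpha> \<alpha>"
  by (simp add: conn_iff_rtranclp)

lemma conn_uminus_iff [simp]: "conn \<alpha> (- \<beta>) \<longleftrightarrow> conn \<alpha> \<beta>"
  by (auto simp: conn_iff_rtranclp)

lemma conn_sym:
  assumes "conn \<alpha> \<beta>" "\<beta> \<in> \<Lambda>1"
  shows "conn \<beta> \<alpha>"
proof -
  have "root_step\<^sup>*\<^sup>* \<alpha> \<beta> \<or> root_step\<^sup>*\<^sup>* \<alpha> (- \<beta>)"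
    using assms(1) by (simp add: conn_iff_rtranclp)
  then have "root_step\<^sup>*\<^sup>* \<beta> \<alpha> \<or> root_step\<^sup>*\<^sup>* \<beta> (- \<alpha>)"
    using rtranclp_root_step_sym rtranclp_root_step_uminus[of "- \<beta>" \<alpha>] by auto
  then show ?thesis using assms(2) by (simp add: conn_iff_rtranclp)
qed

lemma conn_trans:
  assumes "conn \<alpha> \<beta>" "conn \<beta> \<gamma>"
  shows "conn \<alpha> \<gamma>"
proof -
  obtain \<beta>' where \<beta>': "\<beta>' \<in> {\<beta>, - \<beta>}" "root_step\<^sup>*\<^sup>* \<alpha> \<beta>'"
    using assms(1) by (auto simp: conn_iff_rtranclp)
  obtain \<gamma>' where \<gamma>': "\<gamma>' \<in> {\<gamma>, - \<gamma>}" "root_step\<^sup>*\<^sup>* \<beta> \<gamma>'"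
    using assms(2) by (auto simp: conn_iff_rtranclp)
  have "root_step\<^sup>*\<^sup>* \<beta>' \<gamma>' \<or> root_step\<^sup>*\<^sup>* \<beta>' (- \<gamma>')"
    using \<beta>'(1) \<gamma>'(2) rtranclp_root_step_uminus by auto
  then have "root_step\<^sup>*\<^sup>* \<alpha> \<gamma>' \<or> root_step\<^sup>*\<^sup>* \<alpha> (- \<gamma>')"
    using \<beta>'(2) rtranclp_trans[of root_step \<alpha> \<beta>'] by blast
  then show ?thesis
    using \<gamma>'(1) conn_imp_\<Lambda>1[OF assms(1)] by (auto simp: conn_iff_rtranclp)
qed

lemma conn_via_\<Lambda>0:
  assumes "\<rho> \<in> \<Lambda>1" "\<nu> \<in> insert 0 \<Lambda>1" "\<rho> + \<nu> \<in> \<Lambda>0" "\<xi> \<in> insert 0 \<Lambda>1" "\<rho> + \<nu> + \<xi> \<in> \<Lambda>1"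
  shows "conn \<rho> (\<rho> + \<nu> + \<xi>)"
proof -
  have "root_step \<rho> (\<rho> + \<nu> + \<xi>)"
    using assms unfolding root_step_def by (intro conjI bexI[of _ "\<rho> + \<nu>"]) simp_all
  then show ?thesis using assms(1) by (simp add: conn_iff_rtranclp r_into_rtranclp)
qed

lemma mem_cls_iff: "\<beta> \<in> cls \<alpha> \<longleftrightarrow> \<beta> \<in> \<Lambda>1 \<and> conn \<alpha> \<beta>"
  by (simp add: conn_class_def)

lemma cls_subset_\<Lambda>1: "cls \<alpha> \<subseteq> \<Lambda>1"
  by (auto simp: mem_cls_iff)

lemma cls_self: "\<alpha> \<in> \<Lambda>1 \<Longrightarrow> \<alpha> \<in> cls \<alpha>"
  by (simp add: mem_cls_iff conn_refl)

lemma uminus_cls_iff [simp]: "- \<beta> \<in> cls \<alpha> \<longleftrightarrow> \<beta> \<in> cls \<alpha>"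
  by (simp add: mem_cls_iff)

lemma cls_eq:
  assumes "\<beta> \<in> cls \<alpha>"
  shows "cls \<beta> = cls \<alpha>"
proof -
  have "conn \<alpha> \<beta>" "conn \<beta> \<alpha>"
    using assms conn_sym conn_imp_\<Lambda>1 by (simp_all add: mem_cls_iff)
  then show ?thesis
    unfolding set_eq_iff mem_cls_iff using conn_trans by blast
qed

lemma cls_disjoint: "cls \<alpha> \<noteq> cls \<beta> \<Longrightarrow> cls \<alpha> \<inter> cls \<beta> = {}"
  using cls_eq by blast

section \<open>Nonzero products of weight vectors\<close>

text \<open>\<open>T \<alpha>\<close> is defined for every functional \<open>\<alpha>\<close>; only for \<open>dual \<alpha>\<close> does a nonzero element
  force \<open>\<alpha> \<in> insert 0 \<Lambda>1\<close>.\<close>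

definition weight_vector :: "('v L0 \<Rightarrow> 'k) \<Rightarrow> 'v \<Rightarrow> bool" where
  "weight_vector \<alpha> x \<longleftrightarrow> dual \<alpha> \<and> x \<in> T \<alpha>"

lemma weight_vector_tp:
  "weight_vector \<alpha> x \<Longrightarrow> weight_vector \<beta> y \<Longrightarrow> weight_vector \<gamma> z
   \<Longrightarrow> weight_vector (\<alpha> + \<beta> + \<gamma>) (tp x y z)"
  by (simp add: weight_vector_def tp_T dual_add)

lemma weight_vector_root: "\<mu> \<in> insert 0 \<Lambda>1 \<Longrightarrow> x \<in> T \<mu> \<Longrightarrow> weight_vector \<mu> x"
  by (simp add: weight_vector_def dual_root)

lemma tp_nonzero_roots:
  assumes "weight_vector r1 x" "weight_vector r2 y" "weight_vector r3 z" and nz: "tp x y z \<noteq> 0"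
  shows "{r1, r2, r3, r1 + r2 + r3} \<subseteq> insert 0 \<Lambda>1"
proof -
  have "x \<noteq> 0" "y \<noteq> 0" "z \<noteq> 0" using nz by auto
  then show ?thesis
    using assms(1-3) weight_vector_tp[OF assms(1-3)] nz nonzero_T_root
    unfolding weight_vector_def by auto
qed

lemma conn_through_\<Lambda>0:
  assumes \<rho>: "\<rho> \<in> \<Lambda>1" and \<nu>: "\<nu> \<in> insert 0 \<Lambda>1" "\<rho> + \<nu> \<in> \<Lambda>0"
    and \<xi>: "\<xi> \<in> insert 0 \<Lambda>1" "\<rho> + \<nu> + \<xi> \<in> insert 0 \<Lambda>1"
  shows "\<forall>\<mu>\<in>{\<nu>, \<xi>, \<rho> + \<nu> + \<xi>} - {0}. conn \<rho> \<mu>"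
proof -
  have via: "conn \<rho> (\<rho> + \<nu> + \<xi>')" if "\<xi>' \<in> insert 0 \<Lambda>1" "\<rho> + \<nu> + \<xi>' \<in> \<Lambda>1" for \<xi>'
    using conn_via_\<Lambda>0[OF \<rho> \<nu> that] .
  have "conn \<rho> \<nu>" if "\<nu> \<noteq> 0"
    using via[of "- \<rho>"] \<rho> \<nu> that by (simp add: add.commute)
  moreover have "conn \<rho> \<xi>" if "\<xi> \<noteq> 0"
  proof -
    have "- (\<rho> + \<nu> + \<xi>) \<in> insert 0 \<Lambda>1" "- \<xi> \<in> \<Lambda>1"
      using \<xi> that by (simp_all only: uminus_roots_iff uminus_\<Lambda>1_iff) auto
    moreover have "\<rho> + \<nu> + - (\<rho> + \<nu> + \<xi>) = - \<xi>" by (simp add: algebra_simps)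
    ultimately show ?thesis using via[of "- (\<rho> + \<nu> + \<xi>)"] by simp
  qed
  moreover have "conn \<rho> (\<rho> + \<nu> + \<xi>)" if "\<rho> + \<nu> + \<xi> \<noteq> 0"
    using via[of \<xi>] \<xi> that by simp
  ultimately show ?thesis by blast
qed

lemma tp_opposite_roots_connected:
  assumes x: "weight_vector \<rho> x" and y: "weight_vector (- \<rho>) y" and z: "weight_vector \<delta> z"
    and nz: "tp x y z \<noteq> 0" and roots: "\<rho> \<in> \<Lambda>1" "\<delta> \<in> \<Lambda>1"
  shows "conn \<rho> \<delta>"
proof (cases "tp x z y = 0")
  case False
  show ?thesis
  proof (cases "\<rho> + \<delta> = 0")
    case True
    then show ?thesis using conn_refl[OF roots(1)] by (simp add: eq_neg_iff_add_eq_0[symmetric])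
  next
    case nonzero: False
    have "\<rho> + \<delta> \<in> \<Lambda>0"
      using sum_in_\<Lambda>0[OF _ _ _ _ nonzero tensor_nonzero_left[OF False]] x z
      by (simp add: weight_vector_def)
    then show ?thesis
      using conn_via_\<Lambda>0[OF roots(1), of \<delta> "- \<rho>"] roots by (simp add: add.commute)
  qed
next
  case True
  show ?thesis
  proof (cases "\<delta> = \<rho>")
    case True
    then show ?thesis using conn_refl[OF roots(1)] by simp
  next
    case False
    then have "- \<rho> + \<delta> \<noteq> 0" by simp
    moreover have "tp x y z - tp x z y \<noteq> 0" using nz True by simp
    ultimately have "- \<rho> + \<delta> \<in> \<Lambda>0"
      using sum_in_\<Lambda>0[of y "- \<rho>" z \<delta>] tensor_nonzero_right y z unfolding weight_vector_def by blast
    then have "\<rho> + - \<delta> \<in> \<Lambda>0"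
      using uminus_\<Lambda>0_iff[of "- \<rho> + \<delta>"] by (simp add: algebra_simps)
    then have "conn \<rho> (\<rho> + - \<delta> + - \<rho>)"
      using conn_via_\<Lambda>0[OF roots(1), of "- \<delta>" "- \<rho>"] roots by simp
    then show ?thesis by simp
  qed
qed

lemma tp_roots_connected:
  assumes "weight_vector r1 x" "weight_vector r2 y" "weight_vector r3 z" and nz: "tp x y z \<noteq> 0"
  shows "\<exists>\<rho>. \<forall>\<mu>\<in>{r1, r2, r3, r1 + r2 + r3} - {0}. conn \<rho> \<mu>"
proof -
  have roots: "{r1, r2, r3, r1 + r2 + r3} \<subseteq> insert 0 \<Lambda>1"
    by (rule tp_nonzero_roots[OF assms])
  have \<Lambda>0_12: "r1 + r2 \<in> \<Lambda>0" if "r1 + r2 \<noteq> 0"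
    using sum_in_\<Lambda>0[OF _ _ _ _ that tensor_nonzero_left[OF nz]] assms(1,2)
    by (simp add: weight_vector_def)
  consider "r1 \<noteq> 0" "r1 + r2 \<noteq> 0" | "r1 \<noteq> 0" "r2 = - r1" | "r1 = 0" "r2 \<noteq> 0" | "r1 = 0" "r2 = 0"
    by (metis add.commute add_eq_0_iff)
  then show ?thesis
  proof cases
    case 1
    then have r1: "r1 \<in> \<Lambda>1" using roots by auto
    have "\<forall>\<mu>\<in>{r2, r3, r1 + r2 + r3} - {0}. conn r1 \<mu>"
      by (rule conn_through_\<Lambda>0[OF r1 _ \<Lambda>0_12[OF 1(2)]]) (use roots in auto)
    then show ?thesis
      using conn_refl[OF r1] by (intro exI[of _ r1]) auto
  next
    case 2
    then have "r1 \<in> \<Lambda>1" using roots by auto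
    moreover have "conn r1 r3" if "r3 \<noteq> 0"
      using tp_opposite_roots_connected[OF assms(1) _ assms(3) nz \<open>r1 \<in> \<Lambda>1\<close>] assms(2) 2 roots that
      by simp
    ultimately show ?thesis
      using 2 conn_refl by (intro exI[of _ r1]) auto
  next
    case 3
    then have r2: "r2 \<in> \<Lambda>1" "r2 + 0 \<in> \<Lambda>0" using roots \<Lambda>0_12 by auto
    have "\<forall>\<mu>\<in>{0, r3, r2 + 0 + r3} - {0}. conn r2 \<mu>"
      by (rule conn_through_\<Lambda>0[OF r2(1) _ r2(2)]) (use 3 roots in auto)
    then show ?thesis
      using 3 conn_refl[OF r2(1)] by (intro exI[of _ r2]) auto
  next
    case 4
    then show ?thesis
      using roots conn_refl[of r3] by auto
  qed
qed

lemma tp_roots_in_cls: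
  assumes "weight_vector r1 x" "weight_vector r2 y" "weight_vector r3 z" "tp x y z \<noteq> 0"
    and \<gamma>: "\<gamma> \<in> {r1, r2, r3, r1 + r2 + r3} \<inter> cls \<alpha>"
  shows "{r1, r2, r3, r1 + r2 + r3} \<subseteq> insert 0 (cls \<alpha>)"
proof
  fix \<mu> assume \<mu>: "\<mu> \<in> {r1, r2, r3, r1 + r2 + r3}"
  obtain \<rho> where \<rho>: "\<forall>\<mu>\<in>{r1, r2, r3, r1 + r2 + r3} - {0}. conn \<rho> \<mu>"
    using tp_roots_connected[OF assms(1-4)] by blast
  have "\<gamma> \<in> \<Lambda>1" "conn \<alpha> \<gamma>" using \<gamma> by (auto simp: mem_cls_iff)
  moreover have "conn \<rho> \<gamma>" using \<rho> \<gamma> \<Lambda>1_nonzero[OF \<open>\<gamma> \<in> \<Lambda>1\<close>] by blast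
  ultimately have "conn \<alpha> \<rho>" using conn_trans conn_sym by metis
  show "\<mu> \<in> insert 0 (cls \<alpha>)"
  proof (cases "\<mu> = 0")
    case False
    then have "conn \<rho> \<mu>" using \<rho> \<mu> by blast
    moreover have "\<mu> \<in> \<Lambda>1" using tp_nonzero_roots[OF assms(1-4)] \<mu> False by blast
    ultimately show ?thesis using conn_trans[OF \<open>conn \<alpha> \<rho>\<close>] by (simp add: mem_cls_iff)
  qed simp
qed

lemma tp_mixed_cls_zero:
  assumes "cls \<alpha> \<noteq> cls \<beta>" "weight_vector r1 x" "weight_vector r2 y" "weight_vector r3 z"
    and "{r1, r2, r3, r1 + r2 + r3} \<inter> cls \<alpha> \<noteq> {}" "{r1, r2, r3, r1 + r2 + r3} \<inter> cls \<beta> \<noteq> {}"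
  shows "tp x y z = 0"
proof (rule ccontr)
  assume "tp x y z \<noteq> 0"
  then have "{r1, r2, r3, r1 + r2 + r3} \<subseteq> insert 0 (cls \<alpha>)"
    using tp_roots_in_cls[OF assms(2-4)] assms(5) by blast
  moreover obtain \<nu> where "\<nu> \<in> {r1, r2, r3, r1 + r2 + r3}" "\<nu> \<in> cls \<beta>"
    using assms(6) by blast
  moreover have "\<nu> \<noteq> 0" using \<open>\<nu> \<in> cls \<beta>\<close> cls_subset_\<Lambda>1 \<Lambda>1_nonzero by blast
  ultimately show False
    using cls_disjoint[OF assms(1)] by blast
qed

section \<open>The ideals of the connection classes\<close>

definition T0_gens :: "('v L0 \<Rightarrow> 'k) set \<Rightarrow> 'v set" where
  "T0_gens \<Lambda> = {tp x y z | x y z \<beta>1 \<beta>2 \<beta>3. \<beta>1 \<in> insert 0 \<Lambda> \<and> \<beta>2 \<in> insert 0 \<Lambda> \<and> \<beta>3 \<in> insert 0 \<Lambda>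
     \<and> \<beta>1 + \<beta>2 + \<beta>3 = 0 \<and> x \<in> T \<beta>1 \<and> y \<in> T \<beta>2 \<and> z \<in> T \<beta>3}"

definition ideal_gens :: "('v L0 \<Rightarrow> 'k) set \<Rightarrow> 'v set" where
  "ideal_gens \<Lambda> = T0_gens \<Lambda> \<union> (\<Union>\<gamma>\<in>\<Lambda>. T \<gamma>)"

abbreviation "I \<equiv> Ipart sc tp H"

lemma T0part_eq: "T0part sc tp H \<Lambda> = vs.span (T0_gens \<Lambda>)"
  by (simp add: T0part_def T0_gens_def)

lemma Ipart_eq: "I \<Lambda> = vs.span (ideal_gens \<Lambda>)"
  by (simp add: Ipart_def T0part_eq Vpart_def ideal_gens_def vs.span_Un)

lemma subspace_I: "vs.subspace (I \<Lambda>)"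
  by (simp add: Ipart_eq)

lemma I_add: "x \<in> I \<Lambda> \<Longrightarrow> y \<in> I \<Lambda> \<Longrightarrow> x + y \<in> I \<Lambda>"
  and I_diff: "x \<in> I \<Lambda> \<Longrightarrow> y \<in> I \<Lambda> \<Longrightarrow> x - y \<in> I \<Lambda>"
  and I_zero: "0 \<in> I \<Lambda>"
  by (simp_all add: Ipart_eq vs.span_add vs.span_diff vs.span_zero)

lemma T0_gens_subset_T0: "T0_gens \<Lambda> \<subseteq> T 0"
  unfolding T0_gens_def using tp_T by fastforce

lemma T0_gensI:
  "\<beta>1 \<in> insert 0 \<Lambda> \<Longrightarrow> \<beta>2 \<in> insert 0 \<Lambda> \<Longrightarrow> \<beta>3 \<in> insert 0 \<Lambda> \<Longrightarrow> \<beta>1 + \<beta>2 + \<beta>3 = 0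
   \<Longrightarrow> x \<in> T \<beta>1 \<Longrightarrow> y \<in> T \<beta>2 \<Longrightarrow> z \<in> T \<beta>3 \<Longrightarrow> tp x y z \<in> T0_gens \<Lambda>"
  unfolding T0_gens_def by blast

lemma T0_gensE:
  assumes "g \<in> T0_gens (cls \<alpha>)" "g \<noteq> 0"
  obtains a b c r1 r2 r3 where "g = tp a b c"
    "weight_vector r1 a" "weight_vector r2 b" "weight_vector r3 c" "r1 + r2 + r3 = 0"
    "r1 \<in> insert 0 (cls \<alpha>)" "r2 \<in> insert 0 (cls \<alpha>)" "r3 \<in> cls \<alpha>" "r1 \<in> cls \<alpha> \<or> r2 \<in> cls \<alpha>"
proof -
  obtain a b c r1 r2 r3 where g: "g = tp a b c" and r: "r1 \<in> insert 0 (cls \<alpha>)" "r2 \<in> insert 0 (cls \<alpha>)"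
    "r3 \<in> insert 0 (cls \<alpha>)" "r1 + r2 + r3 = 0" and v: "a \<in> T r1" "b \<in> T r2" "c \<in> T r3"
    using assms(1) unfolding T0_gens_def by blast
  have roots: "r1 \<in> insert 0 \<Lambda>1" "r2 \<in> insert 0 \<Lambda>1" "r3 \<in> insert 0 \<Lambda>1"
    using r cls_subset_\<Lambda>1 by auto
  have "r3 \<noteq> 0"
  proof
    assume "r3 = 0"
    then have "r2 = - r1" using r(4) by (simp add: eq_neg_iff_add_eq_0 add.commute)
    then have "b \<in> T (- r1)" "c \<in> T 0" using v \<open>r3 = 0\<close> by simp_all
    then show False
      using tp_opposite_T0[OF roots(1) v(1)] g assms(2) by blast
  qed
  moreover have "r1 \<noteq> 0 \<or> r2 \<noteq> 0" using r(4) calculation by auto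
  ultimately show ?thesis
    using r(1-3) by (intro that[OF g weight_vector_root[OF roots(1) v(1)] weight_vector_root[OF roots(2) v(2)]
        weight_vector_root[OF roots(3) v(3)] r(4) r(1,2)]) auto
qed

lemma tp_in_I:
  assumes "weight_vector r1 x" "weight_vector r2 y" "weight_vector r3 z"
    and "{r1, r2, r3, r1 + r2 + r3} \<inter> cls \<alpha> \<noteq> {}"
  shows "tp x y z \<in> I (cls \<alpha>)"
proof (cases "tp x y z = 0")
  case False
  then have roots: "{r1, r2, r3, r1 + r2 + r3} \<subseteq> insert 0 (cls \<alpha>)"
    using tp_roots_in_cls[OF assms(1-3)] assms(4) by blast
  have "tp x y z \<in> T (r1 + r2 + r3)"
    using weight_vector_tp[OF assms(1-3)] by (simp add: weight_vector_def)
  moreover have "x \<in> T r1" "y \<in> T r2" "z \<in> T r3"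
    using assms(1-3) by (simp_all add: weight_vector_def)
  ultimately have "tp x y z \<in> ideal_gens (cls \<alpha>)"
    using roots unfolding ideal_gens_def by (cases "r1 + r2 + r3 = 0") (auto intro: T0_gensI)
  then show ?thesis unfolding Ipart_eq by (rule vs.span_base)
qed (simp add: I_zero)

lemma T0_gen_tp_left:
  assumes g: "g \<in> T0_gens (cls \<alpha>)" and y: "weight_vector \<beta> y" and z: "weight_vector \<delta> z"
  shows "tp g y z \<in> I (cls \<alpha>)"
proof (cases "g = 0")
  case False
  then obtain a b c r1 r2 r3 where abc: "g = tp a b c" and
    v: "weight_vector r1 a" "weight_vector r2 b" "weight_vector r3 c" and
    r: "r1 + r2 + r3 = 0" "r1 \<in> insert 0 (cls \<alpha>)" "r2 \<in> insert 0 (cls \<alpha>)" "r3 \<in> cls \<alpha>"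
      "r1 \<in> cls \<alpha> \<or> r2 \<in> cls \<alpha>"
    by (rule T0_gensE[OF g])
  have eq: "tp g y z = tp a b (tp c y z) + tp (tp a b y) c z + tp (tp a b z) c y - tp (tp a b z) y c"
    by (simp add: abc leibniz_right[of a b c y z] algebra_simps)
  have t1: "tp a b (tp c y z) \<in> I (cls \<alpha>)"
    using r by (intro tp_in_I[OF v(1,2) weight_vector_tp[OF v(3) y z]]) blast
  have t2: "tp (tp a b y) c z \<in> I (cls \<alpha>)"
    using r by (intro tp_in_I[OF weight_vector_tp[OF v(1,2) y] v(3) z]) blast
  have t3: "tp (tp a b z) c y \<in> I (cls \<alpha>)"
    using r by (intro tp_in_I[OF weight_vector_tp[OF v(1,2) z] v(3) y]) blast
  have t4: "tp (tp a b z) y c \<in> I (cls \<alpha>)"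
    using r by (intro tp_in_I[OF weight_vector_tp[OF v(1,2) z] y v(3)]) blast
  show ?thesis
    unfolding eq by (intro I_add I_diff t1 t2 t3 t4)
qed (simp add: I_zero)

lemma T0_gen_tp_right:
  assumes g: "g \<in> T0_gens (cls \<alpha>)" and y: "weight_vector \<beta> y" and z: "weight_vector \<delta> z"
  shows "tp y z g \<in> I (cls \<alpha>)"
proof (cases "g = 0")
  case False
  then obtain a b c r1 r2 r3 where abc: "g = tp a b c" and
    v: "weight_vector r1 a" "weight_vector r2 b" "weight_vector r3 c" and
    r: "r1 + r2 + r3 = 0" "r1 \<in> insert 0 (cls \<alpha>)" "r2 \<in> insert 0 (cls \<alpha>)" "r3 \<in> cls \<alpha>"
      "r1 \<in> cls \<alpha> \<or> r2 \<in> cls \<alpha>"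
    by (rule T0_gensE[OF g])
  have eq: "tp y z g = tp (tp y z a) b c - tp (tp y z b) a c - tp (tp y z c) a b + tp (tp y z c) b a"
    by (simp add: abc leibniz_right[of y z a b c])
  have t1: "tp (tp y z a) b c \<in> I (cls \<alpha>)"
    using r by (intro tp_in_I[OF weight_vector_tp[OF y z v(1)] v(2,3)]) blast
  have t2: "tp (tp y z b) a c \<in> I (cls \<alpha>)"
    using r by (intro tp_in_I[OF weight_vector_tp[OF y z v(2)] v(1,3)]) blast
  have t3: "tp (tp y z c) a b \<in> I (cls \<alpha>)"
    using r by (intro tp_in_I[OF weight_vector_tp[OF y z v(3)] v(1,2)]) blast
  have t4: "tp (tp y z c) b a \<in> I (cls \<alpha>)"
    using r by (intro tp_in_I[OF weight_vector_tp[OF y z v(3)] v(2,1)]) blast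
  show ?thesis
    unfolding eq by (intro I_add I_diff t1 t2 t3 t4)
qed (simp add: I_zero)

lemma tp_opposite_tp_in_I:
  assumes y: "weight_vector \<beta> y" and c: "c \<in> T \<rho>" "\<rho> \<in> cls \<alpha>" and e: "e \<in> T (- \<rho>)"
    and w: "weight_vector \<mu> w" and z: "weight_vector \<delta> z"
  shows "tp (tp y c e) w z \<in> I (cls \<alpha>)"
proof (cases "tp y c e = 0")
  case False
  have "\<rho> \<in> insert 0 \<Lambda>1" using c(2) cls_subset_\<Lambda>1 by blast
  then have vc: "weight_vector \<rho> c" and ve: "weight_vector (- \<rho>) e"
    using c(1) e by (simp_all add: weight_vector_root)
  have "\<beta> \<in> insert 0 (cls \<alpha>)"
    using tp_roots_in_cls[OF y vc ve False] c(2) by blast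
  moreover have vu: "weight_vector \<beta> (tp y c e)"
    using weight_vector_tp[OF y vc ve] by simp
  ultimately consider "\<beta> = 0" | "\<beta> \<in> cls \<alpha>" by blast
  then show ?thesis
  proof cases
    case 1
    then have "tp y c e \<in> T0_gens (cls \<alpha>)"
      using y c e by (intro T0_gensI[of 0 _ \<rho> "- \<rho>"]) (simp_all add: weight_vector_def)
    then show ?thesis by (rule T0_gen_tp_left[OF _ w z])
  next
    case 2
    then show ?thesis by (intro tp_in_I[OF vu w z]) blast
  qed
qed (simp add: I_zero)

lemma T0_gen_tp_middle:
  assumes g: "g \<in> T0_gens (cls \<alpha>)" and y: "weight_vector \<beta> y" and z: "weight_vector \<delta> z"
  shows "tp y g z \<in> I (cls \<alpha>)"
proof (cases "g = 0")
  case False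
  then obtain a b c r1 r2 r3 where abc: "g = tp a b c" and
    v: "weight_vector r1 a" "weight_vector r2 b" "weight_vector r3 c" and
    r: "r1 + r2 + r3 = 0" "r1 \<in> insert 0 (cls \<alpha>)" "r2 \<in> insert 0 (cls \<alpha>)" "r3 \<in> cls \<alpha>"
      "r1 \<in> cls \<alpha> \<or> r2 \<in> cls \<alpha>"
    by (rule T0_gensE[OF g])
  have eq: "tp y g z = tp (tp y a b) c z - tp (tp y b a) c z - tp (tp y c a) b z + tp (tp y c b) a z"
    by (simp add: abc leibniz_middle[of y a b c z])
  have t1: "tp (tp y a b) c z \<in> I (cls \<alpha>)"
    using r(4) by (intro tp_in_I[OF weight_vector_tp[OF y v(1,2)] v(3) z]) blast
  have t2: "tp (tp y b a) c z \<in> I (cls \<alpha>)"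
    using r(4) by (intro tp_in_I[OF weight_vector_tp[OF y v(2,1)] v(3) z]) blast
  have t3: "tp (tp y c a) b z \<in> I (cls \<alpha>)"
  proof (cases "r2 = 0")
    case True
    then have "r1 = - r3" using r(1) by (simp add: eq_neg_iff_add_eq_0)
    then have "a \<in> T (- r3)" using v(1) by (simp add: weight_vector_def)
    then show ?thesis
      using tp_opposite_tp_in_I[OF y _ r(4) _ v(2) z] v(3) by (simp add: weight_vector_def)
  next
    case False
    then show ?thesis using r(3) by (intro tp_in_I[OF weight_vector_tp[OF y v(3,1)] v(2) z]) auto
  qed
  have t4: "tp (tp y c b) a z \<in> I (cls \<alpha>)"
  proof (cases "r1 = 0")
    case True
    then have "r2 = - r3" using r(1) by (simp add: eq_neg_iff_add_eq_0)
    then have "b \<in> T (- r3)" using v(2) by (simp add: weight_vector_def)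
    then show ?thesis
      using tp_opposite_tp_in_I[OF y _ r(4) _ v(1) z] v(3) by (simp add: weight_vector_def)
  next
    case False
    then show ?thesis using r(2) by (intro tp_in_I[OF weight_vector_tp[OF y v(3,2)] v(1) z]) auto
  qed
  show ?thesis
    unfolding eq by (intro I_add I_diff t1 t2 t3 t4)
qed (simp add: I_zero)

lemma ideal_gen_tp_in_I:
  assumes x: "x \<in> ideal_gens (cls \<alpha>)" and y: "weight_vector \<beta> y" and z: "weight_vector \<delta> z"
  shows "tp x y z \<in> I (cls \<alpha>) \<and> tp y x z \<in> I (cls \<alpha>) \<and> tp y z x \<in> I (cls \<alpha>)"
  using x unfolding ideal_gens_def
proof
  assume "x \<in> T0_gens (cls \<alpha>)"
  then show ?thesis using T0_gen_tp_left T0_gen_tp_middle T0_gen_tp_right y z by blast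
next
  assume "x \<in> (\<Union>\<gamma>\<in>cls \<alpha>. T \<gamma>)"
  then obtain \<gamma> where "\<gamma> \<in> cls \<alpha>" "x \<in> T \<gamma>" by blast
  moreover from this have x: "weight_vector \<gamma> x"
    using cls_subset_\<Lambda>1 by (blast intro: weight_vector_root)
  ultimately show ?thesis
    by (intro conjI tp_in_I[OF x y z] tp_in_I[OF y x z] tp_in_I[OF y z x]; blast)
qed

lemma Ipart_ideal: "is_ideal sc tp (I (cls \<alpha>))"
  unfolding is_ideal_def
proof (intro conjI ballI allI)
  show "vs.subspace (I (cls \<alpha>))" by (rule subspace_I)
  fix x a b assume "x \<in> I (cls \<alpha>)"
  then have "x \<in> vs.span (ideal_gens (cls \<alpha>))" by (simp add: Ipart_eq)
  then have "\<forall>a b. tp x a b \<in> I (cls \<alpha>) \<and> tp a x b \<in> I (cls \<alpha>) \<and> tp a b x \<in> I (cls \<alpha>)"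
  proof (induction rule: vs.span_induct)
    case base
    show ?case using subspace_I unfolding vs.subspace_def by simp
  next
    case (step x)
    have gen: "tp x y z \<in> I (cls \<alpha>)" "tp y x z \<in> I (cls \<alpha>)" "tp y z x \<in> I (cls \<alpha>)"
      if "\<mu> \<in> insert 0 \<Lambda>1" "\<nu> \<in> insert 0 \<Lambda>1" "y \<in> T \<mu>" "z \<in> T \<nu>" for \<mu> \<nu> y z
      using ideal_gen_tp_in_I[OF step weight_vector_root[OF that(1,3)] weight_vector_root[OF that(2,4)]]
      by simp_all
    have "tp x a b \<in> I (cls \<alpha>)" for a b
      by (rule bilinear_root_vector_induct[where f="\<lambda>a b. tp x a b", OF subspace_I
          tp_hom_middle tp_hom_right]) (rule gen(1))
    moreover have "tp a x b \<in> I (cls \<alpha>)" for a b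
      by (rule bilinear_root_vector_induct[where f="\<lambda>a b. tp a x b", OF subspace_I
          tp_hom_left tp_hom_right]) (rule gen(2))
    moreover have "tp a b x \<in> I (cls \<alpha>)" for a b
      by (rule bilinear_root_vector_induct[where f="\<lambda>a b. tp a b x", OF subspace_I
          tp_hom_left tp_hom_middle]) (rule gen(3))
    ultimately show ?case by blast
  qed
  then show "tp x a b \<in> I (cls \<alpha>)" "tp a x b \<in> I (cls \<alpha>)" "tp a b x \<in> I (cls \<alpha>)"
    by blast+
qed

lemma I_tp_closed: "x \<in> I (cls \<alpha>) \<Longrightarrow> tp x a b \<in> I (cls \<alpha>) \<and> tp a x b \<in> I (cls \<alpha>) \<and> tp a b x \<in> I (cls \<alpha>)"
  using Ipart_ideal unfolding is_ideal_def by blast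

lemma ideal_gens_subset_I: "ideal_gens \<Lambda> \<subseteq> I \<Lambda>"
  unfolding Ipart_eq by (rule vs.span_superset)

lemma span_T0_gens_subset_T0: "vs.span (T0_gens \<Lambda>) \<subseteq> T 0"
  by (rule vs.span_minimal[OF T0_gens_subset_T0 subspace_T])

lemma I_subset_span_roots: "I \<Lambda> \<subseteq> vs.span (\<Union>\<gamma>\<in>insert 0 \<Lambda>. T \<gamma>)"
  unfolding Ipart_eq ideal_gens_def using T0_gens_subset_T0 by (intro vs.span_mono) blast

lemma I_weight_vector:
  assumes "x \<in> I (cls \<alpha>)" "weight_vector \<nu> x" "x \<noteq> 0"
  shows "\<nu> \<in> insert 0 (cls \<alpha>)"
proof (rule ccontr)
  assume \<nu>: "\<nu> \<notin> insert 0 (cls \<alpha>)"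
  have "\<nu> \<in> insert 0 \<Lambda>1" using assms(2,3) nonzero_T_root unfolding weight_vector_def by blast
  moreover have "insert 0 (cls \<alpha>) \<subseteq> insert 0 \<Lambda>1" using cls_subset_\<Lambda>1 by blast
  ultimately have "x = 0"
    using root_span_component_zero[of "insert 0 (cls \<alpha>)" \<nu> x] \<nu> assms(1,2) I_subset_span_roots
    by (auto simp: weight_vector_def)
  then show False using assms(3) by blast
qed

lemma I_inter_weight_vector_zero:
  assumes "x \<in> I (cls \<alpha>)" "x \<in> I (cls \<beta>)" "cls \<alpha> \<noteq> cls \<beta>" "weight_vector \<nu> x" "\<nu> \<noteq> 0"
  shows "x = 0"
  using I_weight_vector[OF assms(1,4)] I_weight_vector[OF assms(2,4)] cls_disjoint[OF assms(3)] assms(5)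
  by blast

lemma T0part_inter_Vpart: "T0part sc tp H (cls \<alpha>) \<inter> Vpart sc tp H (cls \<alpha>) = {0}"
proof -
  have "x = 0" if "x \<in> T0part sc tp H (cls \<alpha>)" "x \<in> Vpart sc tp H (cls \<alpha>)" for x
  proof (rule root_span_component_zero)
    show "cls \<alpha> \<subseteq> insert 0 \<Lambda>1" "0 \<in> insert 0 \<Lambda>1 - cls \<alpha>"
      using cls_subset_\<Lambda>1 \<Lambda>1_nonzero by auto
    show "x \<in> T 0" using that(1) span_T0_gens_subset_T0 by (auto simp: T0part_eq)
    show "x \<in> vs.span (\<Union>\<gamma>\<in>cls \<alpha>. T \<gamma>)" using that(2) by (simp add: Vpart_def)
  qed
  moreover have "0 \<in> T0part sc tp H (cls \<alpha>)" "0 \<in> Vpart sc tp H (cls \<alpha>)"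
    by (simp_all add: T0part_eq Vpart_def vs.span_zero)
  ultimately show ?thesis by blast
qed

section \<open>Orthogonality of distinct classes\<close>

context
  fixes \<alpha> \<beta> :: "'v L0 \<Rightarrow> 'k"
  assumes distinct_cls: "cls \<alpha> \<noteq> cls \<beta>"
begin

lemma I_I_product_weight_zero:
  assumes "x \<in> I (cls \<alpha>)" "y \<in> I (cls \<beta>)" "\<nu> \<noteq> 0"
  shows "weight_vector \<nu> (tp x y t) \<Longrightarrow> tp x y t = 0"
    and "weight_vector \<nu> (tp x t y) \<Longrightarrow> tp x t y = 0"
  using I_inter_weight_vector_zero[OF _ _ distinct_cls _ assms(3)] I_tp_closed[OF assms(1)]
    I_tp_closed[OF assms(2)] by blast+

lemma root_T0_gen_tp_middle_zero:
  assumes x: "weight_vector \<gamma> x" "\<gamma> \<in> cls \<alpha>" and g: "g \<in> T0_gens (cls \<beta>)"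
  shows "tp x g t = 0"
proof (cases "g = 0")
  case False
  then obtain a b c r1 r2 r3 where abc: "g = tp a b c" and
    v: "weight_vector r1 a" "weight_vector r2 b" "weight_vector r3 c" and
    r: "r1 + r2 + r3 = 0" "r1 \<in> insert 0 (cls \<beta>)" "r2 \<in> insert 0 (cls \<beta>)" "r3 \<in> cls \<beta>"
      "r1 \<in> cls \<beta> \<or> r2 \<in> cls \<beta>"
    by (rule T0_gensE[OF g])
  have zero: "tp x u w = 0" if "weight_vector \<rho> u" "weight_vector \<sigma> w" "\<rho> \<in> cls \<beta> \<or> \<sigma> \<in> cls \<beta>"
    for u w \<rho> \<sigma>
    using that(3) x(2) by (intro tp_mixed_cls_zero[OF distinct_cls x(1) that(1,2)]) blast+
  have "tp x a b = 0" "tp x b a = 0" "tp x c a = 0" "tp x c b = 0"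
    using zero[OF v(1,2)] zero[OF v(2,1)] zero[OF v(3,1)] zero[OF v(3,2)] r(4,5) by blast+
  then show ?thesis
    by (simp add: abc leibniz_middle[of x a b c t])
qed simp

lemma root_T0_gen_tp_right_zero:
  assumes x: "weight_vector \<gamma> x" "\<gamma> \<in> cls \<alpha>" and t: "t \<in> T (- \<gamma>)"
    and g: "g \<in> T0_gens (cls \<beta>)"
  shows "tp x t g = 0"
proof (cases "g = 0")
  case False
  then obtain a b c r1 r2 r3 where abc: "g = tp a b c" and
    v: "weight_vector r1 a" "weight_vector r2 b" "weight_vector r3 c" and
    r: "r1 + r2 + r3 = 0" "r1 \<in> insert 0 (cls \<beta>)" "r2 \<in> insert 0 (cls \<beta>)" "r3 \<in> cls \<beta>"
      "r1 \<in> cls \<beta> \<or> r2 \<in> cls \<beta>"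
    by (rule T0_gensE[OF g])
  have \<gamma>: "\<gamma> \<in> insert 0 \<Lambda>1" using x(2) cls_subset_\<Lambda>1 by blast
  then have wt: "weight_vector (- \<gamma>) t" using t by (simp add: weight_vector_root)
  have zero: "tp x t u = 0" if "weight_vector \<rho> u" "\<rho> \<in> insert 0 (cls \<beta>)" for u \<rho>
  proof (cases "\<rho> = 0")
    case True
    then show ?thesis
      using tp_opposite_T0[OF \<gamma>] x(1) t that(1) by (simp add: weight_vector_def)
  next
    case False
    then show ?thesis
      using x(2) that(2) by (intro tp_mixed_cls_zero[OF distinct_cls x(1) wt that(1)]) auto
  qed
  have "tp x t a = 0" "tp x t b = 0" "tp x t c = 0"
    using zero v r(2-4) by blast+
  then show ?thesis
    by (simp add: abc leibniz_right[of x t a b c])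
qed simp

lemma T0_gen_root_tp_zero:
  assumes g: "g \<in> T0_gens (cls \<alpha>)" and y: "weight_vector \<epsilon> y" "\<epsilon> \<in> cls \<beta>"
    and t: "weight_vector \<mu> t"
  shows "tp g y t = 0 \<and> tp g t y = 0"
proof (cases "g = 0")
  case False
  then obtain a b c r1 r2 r3 where abc: "g = tp a b c" and
    v: "weight_vector r1 a" "weight_vector r2 b" "weight_vector r3 c" and
    r: "r1 + r2 + r3 = 0" "r1 \<in> insert 0 (cls \<alpha>)" "r2 \<in> insert 0 (cls \<alpha>)" "r3 \<in> cls \<alpha>"
      "r1 \<in> cls \<alpha> \<or> r2 \<in> cls \<alpha>"
    by (rule T0_gensE[OF g])
  have "tp c y t = 0"
    using y(2) r(4) by (intro tp_mixed_cls_zero[OF distinct_cls v(3) y(1) t]) blast+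
  moreover have "tp c t y = 0"
    using y(2) r(4) by (intro tp_mixed_cls_zero[OF distinct_cls v(3) t y(1)]) blast+
  moreover have "tp a b y = 0"
    using y(2) r(5) by (intro tp_mixed_cls_zero[OF distinct_cls v(1,2) y(1)]) blast+
  moreover have "tp (tp a b t) c y = 0"
    using y(2) r(4) by (intro tp_mixed_cls_zero[OF distinct_cls weight_vector_tp[OF v(1,2) t] v(3) y(1)]) blast+
  moreover have "tp (tp a b t) y c = 0"
    using y(2) r(4) by (intro tp_mixed_cls_zero[OF distinct_cls weight_vector_tp[OF v(1,2) t] y(1) v(3)]) blast+
  moreover have "tp g y t = tp a b (tp c y t) + tp (tp a b y) c t + tp (tp a b t) c y - tp (tp a b t) y c"
    "tp g t y = tp a b (tp c t y) + tp (tp a b t) c y + tp (tp a b y) c t - tp (tp a b y) t c"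
    by (simp_all add: abc leibniz_right[of a b c y t] leibniz_right[of a b c t y] algebra_simps)
  ultimately show ?thesis by simp
qed simp

lemma root_T0_gen_orthogonal:
  assumes x: "weight_vector \<gamma> x" "\<gamma> \<in> cls \<alpha>" and g: "g \<in> T0_gens (cls \<beta>)"
    and t: "\<mu> \<in> insert 0 \<Lambda>1" "t \<in> T \<mu>"
  shows "tp x g t = 0 \<and> tp x t g = 0"
proof
  show "tp x g t = 0" by (rule root_T0_gen_tp_middle_zero[OF x g])
  show "tp x t g = 0"
  proof (cases "\<gamma> + \<mu> = 0")
    case True
    then have "t \<in> T (- \<gamma>)" using t(2) by (simp add: add_eq_0_iff)
    then show ?thesis by (rule root_T0_gen_tp_right_zero[OF x _ g])
  next
    case False
    \<comment> \<open>the product lies in both ideals, so its nonzero weight forces it to vanish\<close>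
    have "x \<in> I (cls \<alpha>)" "g \<in> I (cls \<beta>)"
      using x g ideal_gens_subset_I unfolding ideal_gens_def weight_vector_def by blast+
    moreover have "\<gamma> + \<mu> + 0 \<noteq> 0" using False by simp
    moreover have "weight_vector (\<gamma> + \<mu> + 0) (tp x t g)"
      using weight_vector_tp[OF x(1) weight_vector_root[OF t] weight_vector_root] g T0_gens_subset_T0
      by blast
    ultimately show ?thesis by (rule I_I_product_weight_zero(2))
  qed
qed

lemma T0_gens_orthogonal:
  assumes g: "g \<in> T0_gens (cls \<alpha>)" and g': "g' \<in> T0_gens (cls \<beta>)"
    and t: "\<mu> \<in> insert 0 \<Lambda>1" "t \<in> T \<mu>"
  shows "tp g g' t = 0 \<and> tp g t g' = 0"
proof (cases "\<mu> = 0")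
  case True
  then show ?thesis using g g' t(2) T0_gens_subset_T0 tp_T0_T0_T0 by blast
next
  case False
  have w: "weight_vector 0 g" "weight_vector 0 g'" "weight_vector \<mu> t"
    using g g' t T0_gens_subset_T0 by (blast intro: weight_vector_root)+
  have I: "g \<in> I (cls \<alpha>)" "g' \<in> I (cls \<beta>)"
    using g g' ideal_gens_subset_I unfolding ideal_gens_def by blast+
  have "tp g g' t = 0"
    by (rule I_I_product_weight_zero(1)[OF I _ weight_vector_tp[OF w(1,2,3)]]) (use False in simp)
  moreover have "tp g t g' = 0"
    by (rule I_I_product_weight_zero(2)[OF I _ weight_vector_tp[OF w(1,3,2)]]) (use False in simp)
  ultimately show ?thesis ..
qed

lemma ideal_gens_orthogonal:
  assumes x: "x \<in> ideal_gens (cls \<alpha>)" and y: "y \<in> ideal_gens (cls \<beta>)"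
    and t: "\<mu> \<in> insert 0 \<Lambda>1" "t \<in> T \<mu>"
  shows "tp x y t = 0 \<and> tp x t y = 0"
proof -
  have wt: "weight_vector \<mu> t" using t by (rule weight_vector_root)
  have weight: "weight_vector \<rho> u" if "u \<in> T \<rho>" "\<rho> \<in> cls \<gamma>" for u \<rho> \<gamma>
    using that cls_subset_\<Lambda>1 by (blast intro: weight_vector_root)
  consider (root_root) \<gamma> \<epsilon> where "\<gamma> \<in> cls \<alpha>" "x \<in> T \<gamma>" "\<epsilon> \<in> cls \<beta>" "y \<in> T \<epsilon>"
    | (root_gen) \<gamma> where "\<gamma> \<in> cls \<alpha>" "x \<in> T \<gamma>" "y \<in> T0_gens (cls \<beta>)"
    | (gen_root) \<epsilon> where "x \<in> T0_gens (cls \<alpha>)" "\<epsilon> \<in> cls \<beta>" "y \<in> T \<epsilon>"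
    | (gen_gen) "x \<in> T0_gens (cls \<alpha>)" "y \<in> T0_gens (cls \<beta>)"
    using x y unfolding ideal_gens_def by blast
  then show ?thesis
  proof cases
    case root_root
    then have wx: "weight_vector \<gamma> x" and wy: "weight_vector \<epsilon> y" using weight by blast+
    show ?thesis
      using root_root by (intro conjI tp_mixed_cls_zero[OF distinct_cls wx wy wt]
          tp_mixed_cls_zero[OF distinct_cls wx wt wy]; blast)
  next
    case root_gen
    then show ?thesis using root_T0_gen_orthogonal[OF weight _ _ t] by blast
  next
    case gen_root
    then show ?thesis using T0_gen_root_tp_zero[OF _ weight _ wt] by blast
  next
    case gen_gen
    then show ?thesis using T0_gens_orthogonal[OF _ _ t] by blast
  qed
qed

lemma I_orthogonal:
  assumes x: "x \<in> I (cls \<alpha>)" and y: "y \<in> I (cls \<beta>)"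
  shows "tp x y t = 0 \<and> tp x t y = 0"
proof -
  have "x \<in> vs.span (ideal_gens (cls \<alpha>))" using x by (simp add: Ipart_eq)
  then have "\<forall>y\<in>I (cls \<beta>). \<forall>t. tp x y t = 0 \<and> tp x t y = 0"
  proof (induction rule: vs.span_induct)
    case base
    show ?case by (simp add: vs.subspace_def)
  next
    case (step x)
    show ?case
    proof
      fix y assume "y \<in> I (cls \<beta>)"
      then have "y \<in> vs.span (ideal_gens (cls \<beta>))" by (simp add: Ipart_eq)
      then show "\<forall>t. tp x y t = 0 \<and> tp x t y = 0"
      proof (induction rule: vs.span_induct)
        case base
        show ?case by (simp add: vs.subspace_def)
      next
        case (step y)
        show ?case
        proof
          fix t
          show "tp x y t = 0 \<and> tp x t y = 0"
          proof (induction t rule: root_vector_induct)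
            case subspace
            show ?case by (simp add: vs.subspace_def)
          next
            case (root_vector \<mu> t)
            then show ?case using ideal_gens_orthogonal[OF \<open>x \<in> ideal_gens (cls \<alpha>)\<close> step] by blast
          qed
        qed
      qed
    qed
  qed
  then show ?thesis using y by blast
qed

end

section \<open>The direct sum decomposition\<close>

lemma tp_root_vectors_in_some_I:
  assumes "\<mu> \<in> insert 0 \<Lambda>1" "\<nu> \<in> insert 0 \<Lambda>1" "\<rho> \<in> insert 0 \<Lambda>1"
    and "x \<in> T \<mu>" "y \<in> T \<nu>" "z \<in> T \<rho>"
  shows "tp x y z \<in> vs.span (\<Union>C\<in>cls ` \<Lambda>1. I C)"
proof (cases "\<mu> = 0 \<and> \<nu> = 0 \<and> \<rho> = 0")
  case True
  then show ?thesis using assms tp_T0_T0_T0 by (simp add: vs.span_zero)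
next
  case False
  then obtain m where m: "m \<in> {\<mu>, \<nu>, \<rho>}" "m \<in> \<Lambda>1" using assms(1-3) by auto
  then have "tp x y z \<in> I (cls m)"
    using cls_self[OF m(2)] assms by (intro tp_in_I weight_vector_root) auto
  then show ?thesis using m(2) by (intro vs.span_base) blast
qed

lemma span_I_eq_UNIV:
  assumes "vs.span {tp a b c | a b c. True} = UNIV"
  shows "vs.span (\<Union>C\<in>cls ` \<Lambda>1. I C) = UNIV"
proof -
  have "tp a b c \<in> vs.span (\<Union>C\<in>cls ` \<Lambda>1. I C)" for a b c
  proof (rule bilinear_root_vector_induct[where f="\<lambda>a b. tp a b c", OF vs.subspace_span
        tp_hom_left tp_hom_middle])
    fix \<mu> \<nu> x y assume xy: "\<mu> \<in> insert 0 \<Lambda>1" "\<nu> \<in> insert 0 \<Lambda>1" "x \<in> T \<mu>" "y \<in> T \<nu>"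
    show "tp x y c \<in> vs.span (\<Union>C\<in>cls ` \<Lambda>1. I C)"
      by (rule linear_root_vector_induct[where f="tp x y", OF vs.subspace_span tp_hom_right])
        (rule tp_root_vectors_in_some_I[OF xy(1,2) _ xy(3,4)])
  qed
  then have "{tp a b c | a b c. True} \<subseteq> vs.span (\<Union>C\<in>cls ` \<Lambda>1. I C)"
    by blast
  then have "vs.span {tp a b c | a b c. True} \<subseteq> vs.span (\<Union>C\<in>cls ` \<Lambda>1. I C)"
    by (rule vs.span_minimal[OF _ vs.subspace_span])
  then show ?thesis using assms by blast
qed

lemma I_sum_zero_component_annihilates_I:
  assumes F: "finite F" "F \<subseteq> cls ` \<Lambda>1" "\<forall>C\<in>F. f C \<in> I C" "(\<Sum>C\<in>F. f C) = 0" and C0: "C0 \<in> F"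
    and u: "u \<in> I (cls \<beta>)"
  shows "tp (f C0) u b = 0 \<and> tp u (f C0) b = 0 \<and> tp u b (f C0) = 0"
proof -
  have orth: "tp (f C) u b = 0 \<and> tp u (f C) b = 0 \<and> tp u b (f C) = 0"
    if C: "C \<in> F" "C \<noteq> cls \<beta>" for C
  proof -
    obtain \<gamma> where \<gamma>: "C = cls \<gamma>" using C(1) F(2) by blast
    then have ne: "cls \<gamma> \<noteq> cls \<beta>" using C(2) by blast
    have "f C \<in> I (cls \<gamma>)" using F(3) \<gamma> C(1) by blast
    then show ?thesis
      using I_orthogonal[OF ne _ u] I_orthogonal[OF not_sym[OF ne] u] by blast
  qed
  show ?thesis
  proof (cases "C0 = cls \<beta>")
    case False
    then show ?thesis using orth C0 by blast
  next
    case True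
    have "f C0 = - (\<Sum>C\<in>F - {C0}. f C)"
      using F(4) sum.remove[OF F(1) C0, of f] by (simp add: eq_neg_iff_add_eq_0)
    then show ?thesis
      using orth True by (simp add: tp_sum_left tp_sum_middle tp_sum_right)
  qed
qed

lemma I_sum_zero_component_in_Ann:
  assumes span: "vs.span {tp a b c | a b c. True} = UNIV"
    and F: "finite F" "F \<subseteq> cls ` \<Lambda>1" "\<forall>C\<in>F. f C \<in> I C" "(\<Sum>C\<in>F. f C) = 0" and C0: "C0 \<in> F"
  shows "f C0 \<in> Ann tp"
proof -
  have "\<forall>b. tp (f C0) a b = 0 \<and> tp a (f C0) b = 0 \<and> tp a b (f C0) = 0" for a
  proof -
    have "a \<in> vs.span (\<Union>C\<in>cls ` \<Lambda>1. I C)" using span_I_eq_UNIV[OF span] by blast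
    then show ?thesis
    proof (induction rule: vs.span_induct)
      case base
      show ?case by (simp add: vs.subspace_def)
    next
      case (step u)
      then show ?case using I_sum_zero_component_annihilates_I[OF F C0] by blast
    qed
  qed
  then show ?thesis unfolding Ann_def by blast
qed

lemma I_direct_sum:
  assumes "Ann tp = {0}" and "vs.span {tp a b c | a b c. True} = UNIV"
  shows "is_direct_sum sc (cls ` \<Lambda>1) I UNIV"
  unfolding is_direct_sum_def
proof (intro conjI allI ballI impI)
  show "vs.subspace (I C)" for C by (rule subspace_I)
  show "x \<in> UNIV \<longleftrightarrow> (\<exists>F f. finite F \<and> F \<subseteq> cls ` \<Lambda>1 \<and> (\<forall>C\<in>F. f C \<in> I C) \<and> x = (\<Sum>C\<in>F. f C))" for x
  proof -
    have "\<exists>F f. finite F \<and> F \<subseteq> cls ` \<Lambda>1 \<and> (\<forall>C\<in>F. f C \<in> I C) \<and> x = (\<Sum>C\<in>F. f C)"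
      by (rule vs.span_UN_subspaces_sum[where V=I, OF subspace_I]) (use span_I_eq_UNIV[OF assms(2)] in blast)
    then show ?thesis by simp
  qed
  show "f C = 0" if "finite F" "F \<subseteq> cls ` \<Lambda>1" "\<forall>C\<in>F. f C \<in> I C" "(\<Sum>C\<in>F. f C) = 0" "C \<in> F"
    for F f C
    using I_sum_zero_component_in_Ann[OF assms(2) that] assms(1) by blast
qed

end

theorem corollary3p3:
  fixes sc :: "'k::field \<Rightarrow> 'v::ab_group_add \<Rightarrow> 'v"
    and tp :: "'v \<Rightarrow> 'v \<Rightarrow> 'v \<Rightarrow> 'v"
    and H :: "'v L0 set"
  assumes "LTS sc tp"
    and "max_abelianL sc tp H"
    and "split_LTS sc tp H"
    and "symmetric_set (Lambda1 sc tp H)"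
    and "symmetric_set (Lambda0 sc tp H)"
    and "Ann tp = {0}"
    and "module.span sc {tp a b c | a b c. True} = UNIV"
  shows "(\<forall>\<alpha>\<in>Lambda1 sc tp H.
            is_ideal sc tp (Ipart sc tp H (conn_class sc tp H \<alpha>))
            \<and> T0part sc tp H (conn_class sc tp H \<alpha>) \<inter> Vpart sc tp H (conn_class sc tp H \<alpha>) = {0})
       \<and> is_direct_sum sc (conn_class sc tp H ` Lambda1 sc tp H) (Ipart sc tp H) UNIV"
proof -
  interpret split_leibniz_triple_system sc tp H
    by unfold_locales (use assms in auto)
  show ?thesis
    using Ipart_ideal T0part_inter_Vpart I_direct_sum[OF assms(6,7)] by blast
qed

end
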